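(* For every $n>0$, the logics $L_{\mathrm{RCC5}}(\mathcal{RS}^5)=L^{\mathrm S}_{\mathrm{RCC5}}(\mathcal{TOP})=L^{\mathrm S}_{\mathrm{RCC5}}(\mathbb R^n,\mathbb R^n_{\mathrm{reg}})$ are recursively enumerable.
   Context: Topology: interior $\mathbb I$, closure $\mathbb C$; regular closed: $\mathbb C\mathbb I(s)=s$; $\mathfrak T_{\mathrm{reg}}$: non-empty regular closed subsets; $\mathbb R^n$ Euclidean. $\mathfrak R^5(\mathfrak T,U)$: domain $U$ with $\mathrm{eq}$ ($s=t$), $\mathrm{po}$ ($\mathbb Is\cap\mathbb It\ne\emptyset$, neither contained in the other), $\mathrm{dr}$ ($\mathbb Is\cap\mathbb It=\emptyset$), $\mathrm{pp}$ ($s\subseteq t$, $s\neq t$), $\mathrm{ppi}$ (inverse). $\mathcal{TOP}$: all $\mathfrak R^5(\mathfrak T,\mathfrak T_{\mathrm{reg}})$. $\mathcal{RS}^5$: all general RCC5-structures (non-empty $W$ with five mutually disjoint jointly exhaustive relations, $\mathrm{eq}$ identity, $\mathrm{po},\mathrm{dr}$ symmetric, $\mathrm{pp}$ inverse of $\mathrm{ppi}$, satisfying the standard RCC5 composition table). $\mathcal L_{\mathrm{RCC5}}$: modal language with a box per RCC5 relation. $L_{\mathrm{RCC5}}(\mathcal S)$: formulas valid in all models on members of $\mathcal S$; $L^{\mathrm S}_{\mathrm{RCC5}}(\mathcal S)$: formulas valid in all substructures of members of $\mathcal S$. *)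

theory Defs
  imports "HOL-Analysis.Analysis" "HOL-Library.Nat_Bijection"
begin

datatype rel5 = EQ | PO | DR | PP | PPI

datatype fm = Atom nat | Neg fm | Conj fm fm | Box rel5 fm

fun sat :: "'w set \<Rightarrow> (rel5 \<Rightarrow> 'w \<Rightarrow> 'w \<Rightarrow> bool) \<Rightarrow> (nat \<Rightarrow> 'w set) \<Rightarrow> 'w \<Rightarrow> fm \<Rightarrow> bool" where
  "sat W R V w (Atom p) = (w \<in> V p)"
| "sat W R V w (Neg \<phi>) = (\<not> sat W R V w \<phi>)"
| "sat W R V w (Conj \<phi> \<psi>) = (sat W R V w \<phi> \<and> sat W R V w \<psi>)"
| "sat W R V w (Box r \<phi>) = (\<forall>v\<in>W. R r w v \<longrightarrow> sat W R V v \<phi>)"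

definition valid_frame :: "'w set \<Rightarrow> (rel5 \<Rightarrow> 'w \<Rightarrow> 'w \<Rightarrow> bool) \<Rightarrow> fm \<Rightarrow> bool" where
  "valid_frame W R \<phi> \<longleftrightarrow> (\<forall>V. \<forall>w\<in>W. sat W R V w \<phi>)"

text \<open>Standard RCC5 (weak) composition table: comp r s is the set of relations
  that may hold between x and z when r x y and s y z.\<close>
fun comp5 :: "rel5 \<Rightarrow> rel5 \<Rightarrow> rel5 set" where
  "comp5 EQ s = {s}"
| "comp5 r EQ = {r}"
| "comp5 DR DR = UNIV"
| "comp5 DR PO = {DR, PO, PP}"
| "comp5 DR PP = {DR, PO, PP}"
| "comp5 DR PPI = {DR}"
| "comp5 PO DR = {DR, PO, PPI}"
| "comp5 PO PO = UNIV"
| "comp5 PO PP = {PO, PP}"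
| "comp5 PO PPI = {DR, PO, PPI}"
| "comp5 PP DR = {DR}"
| "comp5 PP PO = {DR, PO, PP}"
| "comp5 PP PP = {PP}"
| "comp5 PP PPI = UNIV"
| "comp5 PPI DR = {DR, PO, PPI}"
| "comp5 PPI PO = {PO, PPI}"
| "comp5 PPI PP = {EQ, PO, PP, PPI}"
| "comp5 PPI PPI = {PPI}"

definition rcc5_struct :: "'w set \<Rightarrow> (rel5 \<Rightarrow> 'w \<Rightarrow> 'w \<Rightarrow> bool) \<Rightarrow> bool" where
  "rcc5_struct W R \<longleftrightarrow>
     W \<noteq> {}
   \<and> (\<forall>x\<in>W. \<forall>y\<in>W. \<exists>!r. R r x y)
   \<and> (\<forall>x\<in>W. \<forall>y\<in>W. R EQ x y \<longleftrightarrow> x = y)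
   \<and> (\<forall>x\<in>W. \<forall>y\<in>W. R PO x y \<longleftrightarrow> R PO y x)
   \<and> (\<forall>x\<in>W. \<forall>y\<in>W. R DR x y \<longleftrightarrow> R DR y x)
   \<and> (\<forall>x\<in>W. \<forall>y\<in>W. R PP x y \<longleftrightarrow> R PPI y x)
   \<and> (\<forall>x\<in>W. \<forall>y\<in>W. \<forall>z\<in>W. \<forall>r s. R r x y \<longrightarrow> R s y z \<longrightarrow> (\<exists>t\<in>comp5 r s. R t x z))"

text \<open>L_RCC5 of the class of general RCC5-structures whose carrier lives in type 'w.\<close>
definition RS5_logic :: "'w itself \<Rightarrow> fm set" where
  "RS5_logic (_ :: 'w itself) =
     {\<phi>. \<forall>(W :: 'w set) R. rcc5_struct W R \<longrightarrow> valid_frame W R \<phi>}"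

definition reg_closed :: "'a topology \<Rightarrow> 'a set \<Rightarrow> bool" where
  "reg_closed T s \<longleftrightarrow> T closure_of (T interior_of s) = s"

definition top_rel :: "'a topology \<Rightarrow> rel5 \<Rightarrow> 'a set \<Rightarrow> 'a set \<Rightarrow> bool" where
  "top_rel T r s t = (case r of
      EQ \<Rightarrow> s = t
    | PO \<Rightarrow> (T interior_of s) \<inter> (T interior_of t) \<noteq> {} \<and> \<not> s \<subseteq> t \<and> \<not> t \<subseteq> s
    | DR \<Rightarrow> (T interior_of s) \<inter> (T interior_of t) = {}
    | PP \<Rightarrow> s \<subseteq> t \<and> s \<noteq> t
    | PPI \<Rightarrow> t \<subseteq> s \<and> s \<noteq> t)"

definition T_reg :: "'a topology \<Rightarrow> 'a set set" where
  "T_reg T = {s. s \<noteq> {} \<and> reg_closed T s}"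

text \<open>L^S_RCC5 of the class TOP restricted to spaces with carrier type 'a:
  validity in all (non-empty) substructures of R^5(T, T_reg).\<close>
definition TOP_logic :: "'a itself \<Rightarrow> fm set" where
  "TOP_logic (_ :: 'a itself) =
     {\<phi>. \<forall>(T :: 'a topology) W. W \<noteq> {} \<and> W \<subseteq> T_reg T \<longrightarrow> valid_frame W (top_rel T) \<phi>}"

text \<open>L^S_RCC5(R^n, R^n_reg), with n = CARD('n).\<close>
definition Rn_logic :: "'n::finite itself \<Rightarrow> fm set" where
  "Rn_logic (_ :: 'n itself) =
     {\<phi>. \<forall>W :: (real^'n) set set. W \<noteq> {} \<and> W \<subseteq> T_reg euclidean \<longrightarrow>
           valid_frame W (top_rel euclidean) \<phi>}"

datatype recf = Zf | Sf | Pf nat | Cn recf "recf list" | Pr recf recf | Mn recf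

inductive eval :: "recf \<Rightarrow> nat list \<Rightarrow> nat \<Rightarrow> bool" where
  ev_Z: "eval Zf xs 0"
| ev_S: "eval Sf (x # xs) (Suc x)"
| ev_P: "i < length xs \<Longrightarrow> eval (Pf i) xs (xs ! i)"
| ev_Cn: "list_all2 (\<lambda>g y. eval g xs y) gs ys \<Longrightarrow> eval f ys z \<Longrightarrow> eval (Cn f gs) xs z"
| ev_Pr0: "eval f xs z \<Longrightarrow> eval (Pr f g) (0 # xs) z"
| ev_PrS: "eval (Pr f g) (n # xs) r \<Longrightarrow> eval g (r # n # xs) z \<Longrightarrow> eval (Pr f g) (Suc n # xs) z"
| ev_Mn: "eval f (y # xs) 0 \<Longrightarrow> (\<forall>z<y. \<exists>m. eval f (z # xs) (Suc m)) \<Longrightarrow> eval (Mn f) xs y"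

definition r_enum :: "nat set \<Rightarrow> bool" where
  "r_enum A \<longleftrightarrow> (\<exists>f. \<forall>n. n \<in> A \<longleftrightarrow> (\<exists>y. eval f [n] y))"

fun rcode :: "rel5 \<Rightarrow> nat" where
  "rcode EQ = 0" | "rcode PO = 1" | "rcode DR = 2" | "rcode PP = 3" | "rcode PPI = 4"

fun gn :: "fm \<Rightarrow> nat" where
  "gn (Atom p) = prod_encode (0, p)"
| "gn (Neg \<phi>) = prod_encode (1, gn \<phi>)"
| "gn (Conj \<phi> \<psi>) = prod_encode (2, prod_encode (gn \<phi>, gn \<psi>))"
| "gn (Box r \<phi>) = prod_encode (3, prod_encode (rcode r, gn \<phi>))"

end

theory Submission
  imports Defs
begin

text \<open>A formula fails in some RCC5-structure iff it has partial refutations of every finite size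
  \<open>N\<close>: tables of relation codes and truth values on the points \<open>0, \<dots>, N - 1\<close> that obey the
  RCC5 axioms and the truth conditions, the witness of each false box formula sitting at a place
  fixed in advance. Unravelling a countermodel along its box witnesses yields such tables of
  every size; conversely, by Koenig's lemma, tables of every size glue together to an infinite
  table, which is a countermodel on \<open>\<nat>\<close>. So validity over \<open>\<nat>\<close> is validity over every carrier,
  and it is the \<open>\<Sigma>\<^sub>1\<close> property "for some \<open>N\<close> there is no partial refutation of size \<open>N\<close>",
  a bounded arithmetic condition once the tables are coded by numbers.

  Non-empty regular closed sets of any space form RCC5-structures. Conversely a structure on
  \<open>W\<close> embeds into the regular closed subsets of \<open>\<real>\<^sup>n\<close>: represent a region \<open>x\<close> by the pairs of
  non-disjoint regions one of which is part of \<open>x\<close>, and send it to the closure of the union of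
  pairwise disjoint open balls indexed by these pairs.\<close>

locale rcc5 =
  fixes W :: "'w set" and R :: "rel5 \<Rightarrow> 'w \<Rightarrow> 'w \<Rightarrow> bool"
  assumes rcc5_struct: "rcc5_struct W R"
begin

lemma nonempty: "W \<noteq> {}"
  using rcc5_struct by (simp add: rcc5_struct_def)

lemma ex1_rel: "x \<in> W \<Longrightarrow> y \<in> W \<Longrightarrow> \<exists>!r. R r x y"
  using rcc5_struct by (simp add: rcc5_struct_def)

lemma rel_unique: "x \<in> W \<Longrightarrow> y \<in> W \<Longrightarrow> R r x y \<Longrightarrow> R r' x y \<Longrightarrow> r = r'"
  using ex1_rel by blast

lemma EQ_iff: "x \<in> W \<Longrightarrow> y \<in> W \<Longrightarrow> R EQ x y \<longleftrightarrow> x = y"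
  using rcc5_struct by (simp add: rcc5_struct_def)

lemma PO_sym: "x \<in> W \<Longrightarrow> y \<in> W \<Longrightarrow> R PO x y \<longleftrightarrow> R PO y x"
  using rcc5_struct by (simp add: rcc5_struct_def)

lemma DR_sym: "x \<in> W \<Longrightarrow> y \<in> W \<Longrightarrow> R DR x y \<longleftrightarrow> R DR y x"
  using rcc5_struct by (simp add: rcc5_struct_def)

lemma PP_iff_PPI: "x \<in> W \<Longrightarrow> y \<in> W \<Longrightarrow> R PP x y \<longleftrightarrow> R PPI y x"
  using rcc5_struct by (simp add: rcc5_struct_def)

lemma composition:
  "x \<in> W \<Longrightarrow> y \<in> W \<Longrightarrow> z \<in> W \<Longrightarrow> R r x y \<Longrightarrow> R s y z \<Longrightarrow> \<exists>q\<in>comp5 r s. R q x z"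
  using rcc5_struct by (simp add: rcc5_struct_def)

end

fun converse5 :: "rel5 \<Rightarrow> rel5" where
  "converse5 PP = PPI"
| "converse5 PPI = PP"
| "converse5 r = r"

lemma (in rcc5) rel_converse: "x \<in> W \<Longrightarrow> y \<in> W \<Longrightarrow> R r x y \<Longrightarrow> R (converse5 r) y x"
  by (cases r) (auto simp: EQ_iff PO_sym DR_sym PP_iff_PPI)

lemma not_in_RS5_logic:
  "\<phi> \<notin> RS5_logic TYPE('w) \<longleftrightarrow> (\<exists>(W :: 'w set) R V. rcc5_struct W R \<and> (\<exists>w\<in>W. \<not> sat W R V w \<phi>))"
  unfolding RS5_logic_def valid_frame_def by blast

lemma comp5_EQ_right [simp]: "comp5 r EQ = {r}"
  by (cases r) auto

abbreviation pair_code :: "nat \<Rightarrow> nat \<Rightarrow> nat" where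
  "pair_code a b \<equiv> prod_encode (a, b)"

abbreviation "neg_code d \<equiv> pair_code 1 d"
abbreviation "conj_code d e \<equiv> pair_code 2 (pair_code d e)"
abbreviation "box_code r d \<equiv> pair_code 3 (pair_code r d)"

lemma pair_code_ge_add: "a + b \<le> pair_code a b"
proof -
  have "n \<le> triangle n" for n
    by (induction n) auto
  from this[of "a + b"] show ?thesis
    by (simp add: prod_encode_def)
qed

lemma pair_code_gt_snd: "0 < a \<Longrightarrow> b < pair_code a b"
  using pair_code_ge_add[of a b] by simp

lemma gn_subformula_less:
  "gn \<psi> < gn (Neg \<psi>)" "gn \<psi> < gn (Conj \<psi> \<theta>)" "gn \<theta> < gn (Conj \<psi> \<theta>)" "gn \<psi> < gn (Box r \<psi>)"
  using pair_code_gt_snd[of 1 "gn \<psi>"] pair_code_gt_snd[of 2 "pair_code (gn \<psi>) (gn \<theta>)"]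
    pair_code_ge_add[of "gn \<psi>" "gn \<theta>"] pair_code_gt_snd[of 3 "pair_code (rcode r) (gn \<psi>)"]
    pair_code_ge_add[of "rcode r" "gn \<psi>"]
  by auto

fun decode_rel5 :: "nat \<Rightarrow> rel5" where
  "decode_rel5 0 = EQ"
| "decode_rel5 (Suc 0) = PO"
| "decode_rel5 (Suc (Suc 0)) = DR"
| "decode_rel5 (Suc (Suc (Suc 0))) = PP"
| "decode_rel5 _ = PPI"

lemma decode_rel5_rcode [simp]: "decode_rel5 (rcode r) = r"
  by (cases r) (simp_all add: eval_nat_numeral)

lemma decode_rel5_numeral: "decode_rel5 1 = PO" "decode_rel5 2 = DR" "decode_rel5 3 = PP" "decode_rel5 4 = PPI"
  by (simp_all add: eval_nat_numeral)

lemma rcode_less_5 [simp]: "rcode r < 5"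
  by (cases r) simp_all

lemma rcode_decode_rel5: "k < 5 \<Longrightarrow> rcode (decode_rel5 k) = k"
  by (cases k rule: decode_rel5.cases) simp_all

lemma prod_decode_Suc_less: "(Suc k, m) = prod_decode c \<Longrightarrow> m < c"
  using pair_code_gt_snd[of "Suc k" m] by (metis prod_decode_inverse zero_less_Suc)

lemma prod_decode_le: "fst (prod_decode m) \<le> m" "snd (prod_decode m) \<le> m"
  by (metis le_prod_encode_1 le_prod_encode_2 prod.collapse prod_decode_inverse)+

text \<open>The inverse of \<^const>\<open>gn\<close>; numbers that code no formula decode to \<open>Atom 0\<close>.\<close>
function decode_fm :: "nat \<Rightarrow> fm" where
  "decode_fm c = (case prod_decode c of
      (0, m) \<Rightarrow> Atom m
    | (Suc 0, m) \<Rightarrow> Neg (decode_fm m)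
    | (Suc (Suc 0), m) \<Rightarrow> Conj (decode_fm (fst (prod_decode m))) (decode_fm (snd (prod_decode m)))
    | (Suc (Suc (Suc 0)), m) \<Rightarrow>
        (if fst (prod_decode m) < 5
         then Box (decode_rel5 (fst (prod_decode m))) (decode_fm (snd (prod_decode m)))
         else Atom 0)
    | _ \<Rightarrow> Atom 0)"
  by auto
termination
  by (relation "Wellfounded.measure id")
    (auto dest!: prod_decode_Suc_less intro: le_less_trans[OF prod_decode_le(1)] le_less_trans[OF prod_decode_le(2)])

declare decode_fm.simps [simp del]

lemma decode_fm_Atom_code: "decode_fm (pair_code 0 p) = Atom p"
  and decode_fm_Neg_code: "decode_fm (neg_code d) = Neg (decode_fm d)"
  and decode_fm_Conj_code: "decode_fm (conj_code d e) = Conj (decode_fm d) (decode_fm e)"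
  and decode_fm_Box_code: "r < 5 \<Longrightarrow> decode_fm (box_code r d) = Box (decode_rel5 r) (decode_fm d)"
  by (subst decode_fm.simps; simp add: numeral_2_eq_2 numeral_3_eq_3)+

lemma decode_fm_gn [simp]: "decode_fm (gn \<phi>) = \<phi>"
  by (induction \<phi>)
    (simp_all add: decode_fm_Atom_code decode_fm_Neg_code[simplified] decode_fm_Conj_code
      decode_fm_Box_code)

section \<open>Partial refutations\<close>

text \<open>Bit \<open>25 r + 5 s + q\<close> of this number is set iff \<open>q \<in> comp5 r s\<close>, reading \<open>r, s, q < 5\<close>
  as relations via \<^const>\<open>decode_rel5\<close>.\<close>
definition comp5_table :: nat where
  "comp5_table = 22418493373991467656332136023735930945"

definition comp5_bit :: "nat \<Rightarrow> nat \<Rightarrow> nat \<Rightarrow> bool" where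
  "comp5_bit r s q \<longleftrightarrow> comp5_table div 2 ^ (25 * r + 5 * s + q) mod 2 = 1"

lemma comp5_bit_iff:
  assumes "r < 5" "s < 5" "q < 5"
  shows "comp5_bit r s q \<longleftrightarrow> decode_rel5 q \<in> comp5 (decode_rel5 r) (decode_rel5 s)"
proof -
  have less_5: "k < 5 \<Longrightarrow> k = 0 \<or> k = 1 \<or> k = 2 \<or> k = 3 \<or> k = 4" for k :: nat
    by auto
  from less_5[OF assms(1)] less_5[OF assms(2)] less_5[OF assms(3)] show ?thesis
    by (elim disjE; simp add: comp5_bit_def comp5_table_def decode_rel5_numeral)
qed

abbreviation "witness_point u c \<equiv> Suc (pair_code u c)"

text \<open>A partial refutation of size \<open>N\<close> of the formula coded \<open>K - 1\<close> is a finite approximation,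
  on the points \<open>0, \<dots>, N - 1\<close>, of a model refuting that formula at \<open>0\<close>: \<open>\<rho> x y\<close> codes the
  relation between \<open>x\<close> and \<open>y\<close>, and \<open>t u c\<close> is the truth value at \<open>u\<close> of the formula coded
  \<open>c < K\<close>. A box formula \<open>c\<close> false at \<open>u\<close> has its refuting witness at the point \<open>witness_point u c\<close>,
  so that a partial refutation of size \<open>N\<close> restricts to one of any smaller size.\<close>
definition rel_codes :: "nat \<Rightarrow> (nat \<Rightarrow> nat \<Rightarrow> nat) \<Rightarrow> bool" where
  "rel_codes N \<rho> \<longleftrightarrow>
     (\<forall>x<N. \<rho> x x = 0) \<and>
     (\<forall>x<N. \<forall>y<N. (\<rho> x y, \<rho> y x) \<in> {(0, 0), (1, 1), (2, 2), (3, 4), (4, 3)}) \<and>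
     (\<forall>x<N. \<forall>y<N. \<forall>z<N. comp5_bit (\<rho> x y) (\<rho> y z) (\<rho> x z))"

definition truth_codes :: "nat \<Rightarrow> nat \<Rightarrow> (nat \<Rightarrow> nat \<Rightarrow> nat) \<Rightarrow> (nat \<Rightarrow> nat \<Rightarrow> bool) \<Rightarrow> bool" where
  "truth_codes K N \<rho> t \<longleftrightarrow>
     (\<forall>u<N. \<forall>v<N. \<forall>c<K. \<rho> u v = 0 \<longrightarrow> t u c \<longrightarrow> t v c) \<and>
     (\<forall>u<N. \<forall>d<K. neg_code d < K \<longrightarrow> (t u (neg_code d) \<longleftrightarrow> \<not> t u d)) \<and>
     (\<forall>u<N. \<forall>d<K. \<forall>e<K. conj_code d e < K \<longrightarrow> (t u (conj_code d e) \<longleftrightarrow> t u d \<and> t u e)) \<and>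
     (\<forall>u<N. \<forall>v<N. \<forall>d<K. box_code (\<rho> u v) d < K \<longrightarrow> t u (box_code (\<rho> u v) d) \<longrightarrow> t v d)"

definition box_witnesses :: "nat \<Rightarrow> nat \<Rightarrow> (nat \<Rightarrow> nat \<Rightarrow> nat) \<Rightarrow> (nat \<Rightarrow> nat \<Rightarrow> bool) \<Rightarrow> bool" where
  "box_witnesses K N \<rho> t \<longleftrightarrow>
     (\<forall>u<N. \<forall>r<5. \<forall>d<K. box_code r d < K \<longrightarrow> \<not> t u (box_code r d) \<longrightarrow>
        witness_point u (box_code r d) < N \<longrightarrow>
        \<rho> u (witness_point u (box_code r d)) = r \<and> \<not> t (witness_point u (box_code r d)) d)"

definition partial_refutation :: "nat \<Rightarrow> nat \<Rightarrow> (nat \<Rightarrow> nat \<Rightarrow> nat) \<Rightarrow> (nat \<Rightarrow> nat \<Rightarrow> bool) \<Rightarrow> bool" where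
  "partial_refutation K N \<rho> t \<longleftrightarrow>
     rel_codes N \<rho> \<and> truth_codes K N \<rho> t \<and> box_witnesses K N \<rho> t \<and> (0 < N \<longrightarrow> \<not> t 0 (K - 1))"

lemma all_less_mono:
  fixes n m :: nat
  assumes "n \<le> m"
  shows "\<forall>x<m. P x \<Longrightarrow> \<forall>x<n. P x" and "\<forall>x<m. \<forall>y<m. Q x y \<Longrightarrow> \<forall>x<n. \<forall>y<n. Q x y"
  using assms by simp_all

lemma partial_refutation_less_5:
  assumes "partial_refutation K N \<rho> t" "x < N" "y < N"
  shows "\<rho> x y < 5"
proof -
  have "(\<rho> x y, \<rho> y x) \<in> {(0, 0), (1, 1), (2, 2), (3, 4), (4, 3)}"
    using assms unfolding partial_refutation_def rel_codes_def by blast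
  then show ?thesis by auto
qed

lemma partial_refutation_mono:
  assumes "n \<le> m" "partial_refutation K m \<rho> t"
  shows "partial_refutation K n \<rho> t"
proof -
  have less_m: "x < n \<Longrightarrow> x < m" for x
    using assms(1) by simp
  from assms(2) have rel: "rel_codes m \<rho>" and truth: "truth_codes K m \<rho> t"
    and witnesses: "box_witnesses K m \<rho> t" and root: "0 < m \<longrightarrow> \<not> t 0 (K - 1)"
    unfolding partial_refutation_def by blast+
  have "rel_codes n \<rho>"
    using rel by (simp add: rel_codes_def less_m)
  moreover have "truth_codes K n \<rho> t"
    using truth unfolding truth_codes_def
    by (elim conjE, intro conjI) (erule all_less_mono(2)[OF assms(1)] all_less_mono(1)[OF assms(1)])+
  moreover have "box_witnesses K n \<rho> t"
    using witnesses by (simp add: box_witnesses_def less_m)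
  ultimately show ?thesis
    using root less_m by (simp add: partial_refutation_def)
qed

lemma partial_refutation_cong:
  assumes "0 < K" "\<forall>x<N. \<forall>y<N. \<rho> x y = \<rho>' x y" "\<forall>u<N. \<forall>c<K. t u c = t' u c"
  shows "partial_refutation K N \<rho> t \<longleftrightarrow> partial_refutation K N \<rho>' t'"
  using assms unfolding partial_refutation_def rel_codes_def truth_codes_def box_witnesses_def by simp

locale refutation =
  fixes K :: nat and \<rho> :: "nat \<Rightarrow> nat \<Rightarrow> nat" and t :: "nat \<Rightarrow> nat \<Rightarrow> bool"
  assumes partial_refutation: "partial_refutation K N \<rho> t"
begin

lemma rel_codes: "rel_codes N \<rho>"
  using partial_refutation unfolding partial_refutation_def by blast

lemma truth_codes: "truth_codes K N \<rho> t"
  using partial_refutation unfolding partial_refutation_def by blast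

lemma rel_code_refl: "\<rho> x x = 0"
  using rel_codes[of "Suc x"] unfolding rel_codes_def by simp

lemma rel_code_converse: "(\<rho> x y, \<rho> y x) \<in> {(0, 0), (1, 1), (2, 2), (3, 4), (4, 3)}"
  using rel_codes[of "Suc (x + y)"] unfolding rel_codes_def by simp

lemma rel_code_less_5: "\<rho> x y < 5"
  using rel_code_converse[of x y] by auto

lemma rel_code_comp: "decode_rel5 (\<rho> x z) \<in> comp5 (decode_rel5 (\<rho> x y)) (decode_rel5 (\<rho> y z))"
  using rel_codes[of "Suc (x + y + z)"] unfolding rel_codes_def
  by (simp add: comp5_bit_iff rel_code_less_5)

lemma truth_cong: "\<rho> u v = 0 \<Longrightarrow> c < K \<Longrightarrow> t u c \<longleftrightarrow> t v c"
proof -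
  let ?N = "Suc (u + v)"
  have "\<forall>x<?N. \<forall>y<?N. \<forall>c<K. \<rho> x y = 0 \<longrightarrow> t x c \<longrightarrow> t y c"
    using truth_codes[of ?N] unfolding truth_codes_def by (elim conjE) assumption
  moreover have "\<rho> v u = 0" if "\<rho> u v = 0"
    using rel_code_converse[of u v] that by auto
  ultimately show "\<rho> u v = 0 \<Longrightarrow> c < K \<Longrightarrow> t u c \<longleftrightarrow> t v c"
    by (metis less_add_Suc1 less_add_Suc2)
qed

lemma truth_neg: "neg_code d < K \<Longrightarrow> t u (neg_code d) \<longleftrightarrow> \<not> t u d"
  using truth_codes[of "Suc u"] pair_code_gt_snd[of 1 d] unfolding truth_codes_def by simp

lemma truth_conj: "conj_code d e < K \<Longrightarrow> t u (conj_code d e) \<longleftrightarrow> t u d \<and> t u e"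
  using truth_codes[of "Suc u"] pair_code_gt_snd[of 2 "pair_code d e"] pair_code_ge_add[of d e]
  unfolding truth_codes_def by simp

lemma truth_box: "box_code (\<rho> u v) d < K \<Longrightarrow> t u (box_code (\<rho> u v) d) \<Longrightarrow> t v d"
proof -
  let ?N = "Suc (u + v)"
  have "\<forall>x<?N. \<forall>y<?N. \<forall>d<K. box_code (\<rho> x y) d < K \<longrightarrow> t x (box_code (\<rho> x y) d) \<longrightarrow> t y d"
    using truth_codes[of ?N] unfolding truth_codes_def by (elim conjE) assumption
  moreover have "d < box_code (\<rho> u v) d"
    using pair_code_gt_snd[of 3 "pair_code (\<rho> u v) d"] pair_code_ge_add[of "\<rho> u v" d] by simp
  ultimately show "box_code (\<rho> u v) d < K \<Longrightarrow> t u (box_code (\<rho> u v) d) \<Longrightarrow> t v d"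
    by (meson less_add_Suc1 less_add_Suc2 less_trans)
qed

lemma truth_box_witness:
  assumes "box_code r d < K" "r < 5" "\<not> t u (box_code r d)"
  shows "\<rho> u (witness_point u (box_code r d)) = r \<and> \<not> t (witness_point u (box_code r d)) d"
proof -
  let ?N = "Suc (witness_point u (box_code r d))"
  have "box_witnesses K ?N \<rho> t"
    using partial_refutation unfolding partial_refutation_def by blast
  moreover have "u < ?N"
    using le_prod_encode_1[of u "box_code r d"] by simp
  ultimately show ?thesis
    using assms pair_code_gt_snd[of 3 "pair_code r d"] pair_code_ge_add[of r d]
    unfolding box_witnesses_def by simp
qed

lemma truth_root: "\<not> t 0 (K - 1)"
  using partial_refutation[of 1] unfolding partial_refutation_def by simp

lemma rel_code_eq_iff: "\<rho> x y = \<rho> x' y' \<longleftrightarrow> decode_rel5 (\<rho> x y) = decode_rel5 (\<rho> x' y')"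
  by (metis rcode_decode_rel5 rel_code_less_5)

lemma rel_code_EQ_left: "\<rho> x y = 0 \<Longrightarrow> \<rho> x z = \<rho> y z"
  using rel_code_comp[of x z y] by (simp add: rel_code_eq_iff)

lemma rel_code_EQ_right: "\<rho> y z = 0 \<Longrightarrow> \<rho> x z = \<rho> x y"
  using rel_code_comp[of x z y] by (simp add: rel_code_eq_iff)

text \<open>Points with relation code \<open>0\<close> stand for the same region; the model keeps the least point of
  each class.\<close>
definition rep :: "nat \<Rightarrow> nat" where
  "rep u = (LEAST v. \<rho> v u = 0)"

definition carrier :: "nat set" where
  "carrier = {u. \<forall>v<u. \<rho> v u \<noteq> 0}"

definition rel :: "rel5 \<Rightarrow> nat \<Rightarrow> nat \<Rightarrow> bool" where
  "rel r x y \<longleftrightarrow> \<rho> x y = rcode r"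

definition val :: "nat \<Rightarrow> nat set" where
  "val p = {u. t u (pair_code 0 p)}"

lemma rep_EQ: "\<rho> (rep u) u = 0"
  unfolding rep_def by (rule LeastI[of _ u]) (rule rel_code_refl)

lemma rep_in_carrier: "rep u \<in> carrier"
  unfolding carrier_def
proof (intro CollectI allI impI notI)
  fix v assume "v < rep u" "\<rho> v (rep u) = 0"
  then have "\<rho> v u = 0"
    using rel_code_EQ_left rep_EQ by metis
  with \<open>v < rep u\<close> show False
    unfolding rep_def using not_less_Least by blast
qed

lemma carrier_EQ:
  assumes "x \<in> carrier" "y \<in> carrier" "\<rho> x y = 0"
  shows "x = y"
proof -
  have "\<rho> y x = 0"
    using rel_code_converse[of x y] assms(3) by auto
  with assms show ?thesis
    by (cases x y rule: linorder_cases) (auto simp: carrier_def)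
qed

lemma rcc5_struct_carrier: "rcc5_struct carrier rel"
  unfolding rcc5_struct_def
proof (intro conjI ballI allI impI)
  show "carrier \<noteq> {}"
    unfolding carrier_def by auto
  fix x y assume "x \<in> carrier" "y \<in> carrier"
  show "\<exists>!r. rel r x y"
    unfolding rel_def using rcode_decode_rel5[OF rel_code_less_5] by (metis decode_rel5_rcode)
  show "rel EQ x y \<longleftrightarrow> x = y"
    unfolding rel_def using carrier_EQ \<open>x \<in> carrier\<close> \<open>y \<in> carrier\<close> rel_code_refl by auto
  show "rel PO x y \<longleftrightarrow> rel PO y x" "rel DR x y \<longleftrightarrow> rel DR y x" "rel PP x y \<longleftrightarrow> rel PPI y x"
    unfolding rel_def using rel_code_converse[of x y] rel_code_converse[of y x] by auto
next
  fix x y z r s assume "rel r x y" "rel s y z"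
  then have "decode_rel5 (\<rho> x z) \<in> comp5 r s"
    using rel_code_comp[of x z y] unfolding rel_def by simp
  moreover have "rel (decode_rel5 (\<rho> x z)) x z"
    unfolding rel_def using rcode_decode_rel5[OF rel_code_less_5] by simp
  ultimately show "\<exists>q\<in>comp5 r s. rel q x z" by blast
qed

lemma refuting_witness:
  assumes "box_code (rcode r) d < K" "\<not> t u (box_code (rcode r) d)"
  obtains v where "v \<in> carrier" "rel r u v" "\<not> t v d"
proof
  let ?w = "witness_point u (box_code (rcode r) d)"
  have w: "\<rho> u ?w = rcode r" "\<not> t ?w d"
    using truth_box_witness[OF assms(1) rcode_less_5 assms(2)] by simp_all
  show "rep ?w \<in> carrier"
    by (rule rep_in_carrier)
  have "\<rho> u (rep ?w) = \<rho> u ?w"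
    using rep_EQ rel_code_converse[of "rep ?w" ?w] by (auto intro: rel_code_EQ_right)
  with w(1) show "rel r u (rep ?w)"
    by (simp add: rel_def)
  have "d < K"
    using assms(1) pair_code_gt_snd[of 3 "pair_code (rcode r) d"] pair_code_ge_add[of "rcode r" d] by simp
  with w(2) show "\<not> t (rep ?w) d"
    using truth_cong[OF rep_EQ] by blast
qed

lemma sat_carrier_iff: "gn \<psi> < K \<Longrightarrow> u \<in> carrier \<Longrightarrow> sat carrier rel val u \<psi> \<longleftrightarrow> t u (gn \<psi>)"
proof (induction \<psi> arbitrary: u)
  case (Atom p)
  then show ?case by (simp add: val_def)
next
  case (Neg \<psi>)
  with gn_subformula_less(1)[of \<psi>] truth_neg[of "gn \<psi>" u] show ?case
    by simp
next
  case (Conj \<psi> \<theta>)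
  with gn_subformula_less(2)[of \<psi> \<theta>] gn_subformula_less(3)[of \<theta> \<psi>] truth_conj[of "gn \<psi>" "gn \<theta>" u] show ?case
    by simp
next
  case (Box r \<psi>)
  have "gn \<psi> < K"
    using Box.prems(1) gn_subformula_less(4)[of \<psi> r] by simp
  show ?case
  proof
    assume "sat carrier rel val u (Box r \<psi>)"
    then show "t u (gn (Box r \<psi>))"
      using refuting_witness[of r "gn \<psi>" u] Box.prems(1) Box.IH[OF \<open>gn \<psi> < K\<close>] by auto
  next
    assume "t u (gn (Box r \<psi>))"
    show "sat carrier rel val u (Box r \<psi>)"
    proof (simp, intro ballI impI)
      fix v assume "v \<in> carrier" "rel r u v"
      with \<open>t u (gn (Box r \<psi>))\<close> Box.prems(1) have "t v (gn \<psi>)"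
        using truth_box[of u v "gn \<psi>"] by (simp add: rel_def)
      with Box.IH[OF \<open>gn \<psi> < K\<close> \<open>v \<in> carrier\<close>] show "sat carrier rel val v \<psi>"
        by simp
    qed
  qed
qed

lemma carrier_refutes: "K = Suc (gn \<phi>) \<Longrightarrow> 0 \<in> carrier \<and> \<not> sat carrier rel val 0 \<phi>"
  using sat_carrier_iff[of \<phi> 0] truth_root by (simp add: carrier_def)

end

lemma refutation_countermodel:
  assumes "refutation (Suc (gn \<phi>)) \<rho> t"
  shows "\<exists>(W :: nat set) R V. rcc5_struct W R \<and> (\<exists>w\<in>W. \<not> sat W R V w \<phi>)"
  using refutation.rcc5_struct_carrier[OF assms] refutation.carrier_refutes[OF assms refl] by blast

function unravel :: "('w \<Rightarrow> nat \<Rightarrow> 'w) \<Rightarrow> 'w \<Rightarrow> nat \<Rightarrow> 'w" where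
  "unravel f w 0 = w"
| "unravel f w (Suc n) = f (unravel f w (fst (prod_decode n))) (snd (prod_decode n))"
  by pat_completeness auto
termination
  by (relation "Wellfounded.measure (\<lambda>(_, _, n). n)") (auto intro: le_imp_less_Suc prod_decode_le)

lemma unravel_in: "w \<in> W \<Longrightarrow> (\<And>x c. x \<in> W \<Longrightarrow> f x c \<in> W) \<Longrightarrow> unravel f w n \<in> W"
  by (induction f w n rule: unravel.induct) auto

context rcc5
begin

definition box_witness :: "(nat \<Rightarrow> 'w set) \<Rightarrow> 'w \<Rightarrow> nat \<Rightarrow> 'w" where
  "box_witness V x c = (case decode_fm c of
      Box r \<psi> \<Rightarrow>
        if \<exists>v\<in>W. R r x v \<and> \<not> sat W R V v \<psi> then SOME v. v \<in> W \<and> R r x v \<and> \<not> sat W R V v \<psi> else x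
    | _ \<Rightarrow> x)"

lemma box_witness_refutes:
  assumes "decode_fm c = Box r \<psi>" "\<exists>v\<in>W. R r x v \<and> \<not> sat W R V v \<psi>"
  shows "box_witness V x c \<in> W \<and> R r x (box_witness V x c) \<and> \<not> sat W R V (box_witness V x c) \<psi>"
proof -
  have "\<exists>v. v \<in> W \<and> R r x v \<and> \<not> sat W R V v \<psi>"
    using assms(2) by blast
  from someI_ex[OF this] show ?thesis
    using assms by (simp add: box_witness_def)
qed

lemma box_witness_in: "x \<in> W \<Longrightarrow> box_witness V x c \<in> W"
proof (cases "decode_fm c")
  case (Box r \<psi>)
  then show "x \<in> W \<Longrightarrow> box_witness V x c \<in> W"
    using box_witness_refutes[OF Box] by (auto simp: box_witness_def)
qed (simp_all add: box_witness_def)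

end

text \<open>Point \<open>u\<close> of the unravelling is the world reached from \<open>w\<close> along the box witnesses
  recorded in the index \<open>u\<close>; relation codes and truth values are read off the structure.\<close>
locale unravelling = rcc5 W R for W :: "'w set" and R +
  fixes V :: "nat \<Rightarrow> 'w set" and w :: 'w
  assumes root_in: "w \<in> W"
begin

definition point :: "nat \<Rightarrow> 'w" where
  "point = unravel (box_witness V) w"

definition code :: "nat \<Rightarrow> nat \<Rightarrow> nat" where
  "code m n = rcode (THE r. R r (point m) (point n))"

definition truth :: "nat \<Rightarrow> nat \<Rightarrow> bool" where
  "truth u c \<longleftrightarrow> sat W R V (point u) (decode_fm c)"

lemma point_in: "point n \<in> W"
  unfolding point_def using root_in box_witness_in by (rule unravel_in)

lemma code_less_5: "code m n < 5"
  by (simp add: code_def)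

lemma code_iff: "code m n = rcode r \<longleftrightarrow> R r (point m) (point n)"
proof -
  have "R (THE r. R r (point m) (point n)) (point m) (point n)"
    using theI'[OF ex1_rel[OF point_in point_in]] .
  then show ?thesis
    unfolding code_def using rel_unique[OF point_in point_in] by (metis decode_rel5_rcode)
qed

lemma R_decode_code: "R (decode_rel5 (code m n)) (point m) (point n)"
  using code_iff[of m n "decode_rel5 (code m n)"] by (simp add: rcode_decode_rel5 code_less_5)

lemma rel_codes_code: "rel_codes N code"
  unfolding rel_codes_def
proof (intro conjI allI impI)
  fix x y z
  show "code x x = 0"
    using code_iff[of x x EQ] EQ_iff[OF point_in point_in] by simp
  obtain q where "R q (point x) (point y)" "code x y = rcode q"
    using R_decode_code code_iff by blast
  moreover from this have "code y x = rcode (converse5 q)"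
    using code_iff rel_converse[OF point_in point_in] by blast
  ultimately show "(code x y, code y x) \<in> {(0, 0), (1, 1), (2, 2), (3, 4), (4, 3)}"
    by (cases q) simp_all
  obtain q where "q \<in> comp5 (decode_rel5 (code x y)) (decode_rel5 (code y z))" "R q (point x) (point z)"
    using composition[OF point_in point_in point_in R_decode_code R_decode_code] by blast
  then show "comp5_bit (code x y) (code y z) (code x z)"
    using code_iff[of x z q] by (simp add: comp5_bit_iff code_less_5)
qed

lemma truth_codes_truth: "truth_codes K N code truth"
  unfolding truth_codes_def
proof (intro conjI allI impI)
  fix u v c d e
  show "truth v c" if "code u v = 0" "truth u c"
    using that code_iff[of u v EQ] EQ_iff[OF point_in point_in] by (simp add: truth_def)
  show "truth u (neg_code d) \<longleftrightarrow> \<not> truth u d"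
    using decode_fm_Neg_code[of d] by (simp add: truth_def)
  show "truth u (conj_code d e) \<longleftrightarrow> truth u d \<and> truth u e"
    by (simp add: truth_def decode_fm_Conj_code)
  show "truth v d" if "truth u (box_code (code u v) d)"
    using that R_decode_code[of u v] point_in by (simp add: truth_def decode_fm_Box_code code_less_5)
qed

lemma box_witnesses_truth: "box_witnesses K N code truth"
  unfolding box_witnesses_def
proof (intro allI impI)
  fix u r d assume "r < 5" "\<not> truth u (box_code r d)"
  then have "\<exists>v\<in>W. R (decode_rel5 r) (point u) v \<and> \<not> sat W R V v (decode_fm d)"
    by (simp add: truth_def decode_fm_Box_code)
  from box_witness_refutes[OF decode_fm_Box_code[OF \<open>r < 5\<close>] this]
  show "code u (witness_point u (box_code r d)) = r \<and> \<not> truth (witness_point u (box_code r d)) d"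
    using code_iff[of u "witness_point u (box_code r d)" "decode_rel5 r"] rcode_decode_rel5[OF \<open>r < 5\<close>]
    by (simp add: point_def truth_def)
qed

lemma refutation: "\<not> sat W R V w \<phi> \<Longrightarrow> refutation (Suc (gn \<phi>)) code truth"
  using rel_codes_code truth_codes_truth box_witnesses_truth
  by unfold_locales (simp add: partial_refutation_def truth_def point_def)

end

lemma (in rcc5) countermodel_refutation:
  assumes "w \<in> W" "\<not> sat W R V w \<phi>"
  shows "\<exists>\<rho> t. refutation (Suc (gn \<phi>)) \<rho> t"
  using unravelling.refutation[of W R w V \<phi>] assms rcc5_axioms
  unfolding unravelling_def unravelling_axioms_def by blast

section \<open>Compactness\<close>

text \<open>If every level \<open>m \<ge> n\<close> of an inverse system maps into a finite set \<open>C\<close>, some element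
  of \<open>C\<close> is hit from every level: otherwise the level above all the misses would hit nothing.\<close>
lemma inverse_system_hit_all:
  fixes A :: "nat \<Rightarrow> 'x set" and res :: "nat \<Rightarrow> 'x \<Rightarrow> 'x"
  assumes "finite C" and hit: "\<And>m. n \<le> m \<Longrightarrow> res n ` A m \<inter> C \<noteq> {}"
    and res_in: "\<And>k m x. k \<le> m \<Longrightarrow> x \<in> A m \<Longrightarrow> res k x \<in> A k"
    and res_res: "\<And>k m x. k \<le> m \<Longrightarrow> res k (res m x) = res k x"
  shows "\<exists>x\<in>C. \<forall>m\<ge>n. x \<in> res n ` A m"
proof (rule ccontr)
  assume "\<not> ?thesis"
  then have "\<forall>x\<in>C. \<exists>m. n \<le> m \<and> x \<notin> res n ` A m"
    by blast
  then have "\<exists>M. \<forall>x\<in>C. n \<le> M x \<and> x \<notin> res n ` A (M x)"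
    by (rule bchoice)
  then obtain M where M: "\<forall>x\<in>C. n \<le> M x \<and> x \<notin> res n ` A (M x)"
    by blast
  define L where "L = Max (insert n (M ` C))"
  have "n \<le> L" and L_bound: "\<And>x. x \<in> C \<Longrightarrow> M x \<le> L"
    unfolding L_def using \<open>finite C\<close> by auto
  then obtain y where "y \<in> A L" "res n y \<in> C"
    using hit[OF \<open>n \<le> L\<close>] by blast
  let ?m = "M (res n y)"
  have "n \<le> ?m" "res n y \<notin> res n ` A ?m"
    using M \<open>res n y \<in> C\<close> by simp_all
  moreover have "res ?m y \<in> A ?m"
    using res_in[OF L_bound[OF \<open>res n y \<in> C\<close>] \<open>y \<in> A L\<close>] .
  moreover have "res n (res ?m y) = res n y"
    using res_res[OF \<open>n \<le> ?m\<close>] .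
  ultimately show False
    by (metis image_eqI)
qed

lemma inverse_system_extend:
  fixes A :: "nat \<Rightarrow> 'x set" and res :: "nat \<Rightarrow> 'x \<Rightarrow> 'x"
  assumes finite: "\<And>n. finite (A n)"
    and res_in: "\<And>n m x. n \<le> m \<Longrightarrow> x \<in> A m \<Longrightarrow> res n x \<in> A n"
    and res_res: "\<And>n m x. n \<le> m \<Longrightarrow> res n (res m x) = res n x"
    and hit: "\<forall>m\<ge>n. x \<in> res n ` A m"
  shows "\<exists>x'\<in>A (Suc n). res n x' = x \<and> (\<forall>m\<ge>Suc n. x' \<in> res (Suc n) ` A m)"
proof -
  let ?C = "{x' \<in> A (Suc n). res n x' = x}"
  have "finite ?C"
    using finite[of "Suc n"] by simp
  moreover have "res (Suc n) ` A m \<inter> ?C \<noteq> {}" if "Suc n \<le> m" for m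
  proof -
    have "x \<in> res n ` A m"
      using hit \<open>Suc n \<le> m\<close> by simp
    then obtain y where "y \<in> A m" "res n y = x"
      by blast
    then have "res (Suc n) y \<in> res (Suc n) ` A m \<inter> ?C"
      using res_in[OF \<open>Suc n \<le> m\<close>] res_res[of n "Suc n" y] by simp
    then show ?thesis by blast
  qed
  ultimately have "\<exists>x'\<in>?C. \<forall>m\<ge>Suc n. x' \<in> res (Suc n) ` A m"
    by (rule inverse_system_hit_all[OF _ _ res_in res_res])
  then show ?thesis
    by blast
qed

lemma inverse_limit_thread:
  fixes A :: "nat \<Rightarrow> 'x set" and res :: "nat \<Rightarrow> 'x \<Rightarrow> 'x"
  assumes finite: "\<And>n. finite (A n)" and nonempty: "\<And>n. A n \<noteq> {}"
    and res_in: "\<And>n m x. n \<le> m \<Longrightarrow> x \<in> A m \<Longrightarrow> res n x \<in> A n"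
    and res_res: "\<And>n m x. n \<le> m \<Longrightarrow> res n (res m x) = res n x"
  shows "\<exists>s. \<forall>n. s n \<in> A n \<and> res n (s (Suc n)) = s n"
proof -
  define good where "good n x \<longleftrightarrow> x \<in> A n \<and> (\<forall>m\<ge>n. x \<in> res n ` A m)" for n x
  have "\<exists>x\<in>A 0. \<forall>m\<ge>0. x \<in> res 0 ` A m"
  proof (rule inverse_system_hit_all[OF finite _ res_in res_res])
    show "res 0 ` A m \<inter> A 0 \<noteq> {}" for m
      using nonempty[of m] res_in[of 0 m] by blast
  qed
  then have good_0: "\<exists>x. good 0 x"
    unfolding good_def by blast
  have good_Suc: "\<exists>x'. good (Suc n) x' \<and> res n x' = x" if "good n x" for n x
  proof -
    have "\<exists>x'\<in>A (Suc n). res n x' = x \<and> (\<forall>m\<ge>Suc n. x' \<in> res (Suc n) ` A m)"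
      by (rule inverse_system_extend) (use finite res_in res_res that in \<open>simp_all add: good_def\<close>)
    then show ?thesis
      unfolding good_def by blast
  qed
  define s where "s = rec_nat (SOME x. good 0 x) (\<lambda>n x. SOME x'. good (Suc n) x' \<and> res n x' = x)"
  have "good n (s n) \<and> res n (s (Suc n)) = s n" for n
  proof (induction n)
    case 0
    have "good 0 (s 0)"
      using someI_ex[OF good_0] by (simp add: s_def)
    then show ?case
      using someI_ex[OF good_Suc[OF \<open>good 0 (s 0)\<close>]] by (simp add: s_def)
  next
    case (Suc n)
    then have "good (Suc n) (s (Suc n))"
      using someI_ex[OF good_Suc[OF Suc[THEN conjunct1]]] by (simp add: s_def)
    then show ?case
      using someI_ex[OF good_Suc[OF \<open>good (Suc n) (s (Suc n))\<close>]] by (simp add: s_def)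
  qed
  then show ?thesis
    unfolding good_def by blast
qed

lemma finite_curried_funs:
  assumes "finite D" "finite B"
  shows "finite {f. \<forall>a b. ((a, b) \<in> D \<longrightarrow> f a b \<in> B) \<and> ((a, b) \<notin> D \<longrightarrow> f a b = d)}"
proof (rule finite_subset)
  let ?G = "{g. \<forall>p. (p \<in> D \<longrightarrow> g p \<in> B) \<and> (p \<notin> D \<longrightarrow> g p = d)}"
  show "{f. \<forall>a b. ((a, b) \<in> D \<longrightarrow> f a b \<in> B) \<and> ((a, b) \<notin> D \<longrightarrow> f a b = d)} \<subseteq> curry ` ?G"
  proof
    fix f assume "f \<in> {f. \<forall>a b. ((a, b) \<in> D \<longrightarrow> f a b \<in> B) \<and> ((a, b) \<notin> D \<longrightarrow> f a b = d)}"
    then have "case_prod f \<in> ?G"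
      by auto
    moreover have "f = curry (case_prod f)"
      by simp
    ultimately show "f \<in> curry ` ?G"
      by blast
  qed
  show "finite (curry ` ?G)"
    by (rule finite_imageI, rule finite_set_of_finite_funs[OF assms])
qed

definition restrict_refutation ::
    "nat \<Rightarrow> nat \<Rightarrow> (nat \<Rightarrow> nat \<Rightarrow> nat) \<times> (nat \<Rightarrow> nat \<Rightarrow> bool) \<Rightarrow> (nat \<Rightarrow> nat \<Rightarrow> nat) \<times> (nat \<Rightarrow> nat \<Rightarrow> bool)" where
  "restrict_refutation K n x =
     (\<lambda>a b. if a < n \<and> b < n then fst x a b else 0, \<lambda>u c. if u < n \<and> c < K then snd x u c else False)"

definition restricted_refutations :: "nat \<Rightarrow> nat \<Rightarrow> ((nat \<Rightarrow> nat \<Rightarrow> nat) \<times> (nat \<Rightarrow> nat \<Rightarrow> bool)) set" where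
  "restricted_refutations K n =
     {x. partial_refutation K n (fst x) (snd x) \<and> restrict_refutation K n x = x}"

lemma restrict_restrict_refutation:
  "n \<le> m \<Longrightarrow> restrict_refutation K n (restrict_refutation K m x) = restrict_refutation K n x"
  by (auto simp: restrict_refutation_def fun_eq_iff)

lemma partial_refutation_restrict:
  assumes "0 < K"
  shows "partial_refutation K n (fst (restrict_refutation K n x)) (snd (restrict_refutation K n x)) \<longleftrightarrow>
    partial_refutation K n (fst x) (snd x)"
  by (rule partial_refutation_cong[OF assms]) (simp_all add: restrict_refutation_def)

lemma restrict_in_restricted_refutations:
  assumes "0 < K" "n \<le> m" "partial_refutation K m (fst x) (snd x)"
  shows "restrict_refutation K n x \<in> restricted_refutations K n"
  using partial_refutation_mono[OF assms(2,3)] restrict_restrict_refutation[OF order_refl]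
  by (simp add: restricted_refutations_def partial_refutation_restrict[OF assms(1)])

lemma finite_restricted_refutations: "finite (restricted_refutations K n)"
proof (rule finite_subset)
  let ?P = "{\<rho> :: nat \<Rightarrow> nat \<Rightarrow> nat. \<forall>a b. ((a, b) \<in> {..<n} \<times> {..<n} \<longrightarrow> \<rho> a b \<in> {..<5}) \<and>
                      ((a, b) \<notin> {..<n} \<times> {..<n} \<longrightarrow> \<rho> a b = 0)}"
  let ?Q = "{t :: nat \<Rightarrow> nat \<Rightarrow> bool. \<forall>a b. ((a, b) \<in> {..<n} \<times> {..<K} \<longrightarrow> t a b \<in> UNIV) \<and>
                    ((a, b) \<notin> {..<n} \<times> {..<K} \<longrightarrow> t a b = False)}"
  show "restricted_refutations K n \<subseteq> ?P \<times> ?Q"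
  proof
    fix x assume "x \<in> restricted_refutations K n"
    then have partial: "partial_refutation K n (fst x) (snd x)" and fixed: "restrict_refutation K n x = x"
      by (simp_all add: restricted_refutations_def)
    have "fst x a b = 0" if "\<not> (a < n \<and> b < n)" for a b
      using arg_cong[OF fixed, of "\<lambda>x. fst x a b"] that by (simp add: restrict_refutation_def)
    moreover have "snd x u c = False" if "\<not> (u < n \<and> c < K)" for u c
      using arg_cong[OF fixed, of "\<lambda>x. snd x u c"] that by (simp add: restrict_refutation_def)
    ultimately show "x \<in> ?P \<times> ?Q"
      using partial_refutation_less_5[OF partial] by (auto simp: mem_Times_iff)
  qed
  show "finite (?P \<times> ?Q)"
    by (intro finite_cartesian_product finite_curried_funs) auto
qed

lemma thread_restrict:
  assumes "\<And>n. s n \<in> restricted_refutations K n" "\<And>n. restrict_refutation K n (s (Suc n)) = s n"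
    and "n \<le> m"
  shows "restrict_refutation K n (s m) = s n"
  using assms(3)
proof (induction m rule: dec_induct)
  case base
  then show ?case
    using assms(1) by (simp add: restricted_refutations_def)
next
  case (step m)
  then show ?case
    using assms(2) restrict_restrict_refutation[where K = K and n = n and m = m and x = "s (Suc m)"] by simp
qed

lemma refutation_of_thread:
  assumes "0 < K" and s: "\<And>n. s n \<in> restricted_refutations K n"
    "\<And>n. restrict_refutation K n (s (Suc n)) = s n"
  shows "refutation K (\<lambda>x y. fst (s (Suc (max x y))) x y) (\<lambda>u c. snd (s (Suc u)) u c)"
proof
  note s_restrict = thread_restrict[OF s]
  have agree_fst: "fst (s n) x y = fst (s m) x y" if "x < n" "y < n" "n \<le> m" for n m x y
    using arg_cong[OF s_restrict[OF that(3)], of "\<lambda>z. fst z x y"] that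
    by (simp add: restrict_refutation_def)
  have agree_snd: "snd (s n) u c = snd (s m) u c" if "u < n" "c < K" "n \<le> m" for n m u c
    using arg_cong[OF s_restrict[OF that(3)], of "\<lambda>z. snd z u c"] that
    by (simp add: restrict_refutation_def)
  fix N
  have rel_eq: "\<forall>x<N. \<forall>y<N. fst (s (Suc (max x y))) x y = fst (s N) x y"
  proof (intro allI impI)
    fix x y assume "x < N" "y < N"
    have "x < Suc (max x y)" "y < Suc (max x y)"
      by auto
    then show "fst (s (Suc (max x y))) x y = fst (s N) x y"
      using agree_fst[OF _ _ max.cobounded1] agree_fst[OF \<open>x < N\<close> \<open>y < N\<close> max.cobounded2]
      by metis
  qed
  have truth_eq: "\<forall>u<N. \<forall>c<K. snd (s (Suc u)) u c = snd (s N) u c"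
  proof (intro allI impI)
    fix u c assume "u < N" "c < K"
    then show "snd (s (Suc u)) u c = snd (s N) u c"
      using agree_snd[OF lessI \<open>c < K\<close> max.cobounded1] agree_snd[OF \<open>u < N\<close> \<open>c < K\<close> max.cobounded2]
      by metis
  qed
  have "partial_refutation K N (fst (s N)) (snd (s N))"
    using s(1) by (simp add: restricted_refutations_def)
  then show "partial_refutation K N (\<lambda>x y. fst (s (Suc (max x y))) x y) (\<lambda>u c. snd (s (Suc u)) u c)"
    using partial_refutation_cong[OF \<open>0 < K\<close> rel_eq truth_eq] by blast
qed

text \<open>Koenig's lemma: restricted to their relevant values, the partial refutations of the
  various sizes form an inverse system of finite sets, and a thread through it is a refutation.\<close>
lemma compactness:
  assumes "0 < K" and partial: "\<And>N. \<exists>\<rho> t. partial_refutation K N \<rho> t"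
  shows "\<exists>\<rho> t. refutation K \<rho> t"
proof -
  let ?A = "restricted_refutations K" and ?res = "restrict_refutation K"
  have "?A n \<noteq> {}" for n
  proof -
    obtain \<rho> t where "partial_refutation K n \<rho> t"
      using partial by blast
    then have "?res n (\<rho>, t) \<in> ?A n"
      using restrict_in_restricted_refutations[OF assms(1) order_refl] by simp
    then show ?thesis by blast
  qed
  moreover have "?res n x \<in> ?A n" if "n \<le> m" "x \<in> ?A m" for n m x
    using that restrict_in_restricted_refutations[OF assms(1)] by (simp add: restricted_refutations_def)
  ultimately have "\<exists>s. \<forall>n. s n \<in> ?A n \<and> ?res n (s (Suc n)) = s n"
    by (rule inverse_limit_thread[OF finite_restricted_refutations _ _ restrict_restrict_refutation])
  then show ?thesis
    using refutation_of_thread[OF assms(1)] by blast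
qed

lemma RS5_logic_nat_subset: "RS5_logic TYPE(nat) \<subseteq> RS5_logic TYPE('w)"
proof
  fix \<phi> assume "\<phi> \<in> RS5_logic TYPE(nat)"
  show "\<phi> \<in> RS5_logic TYPE('w)"
  proof (rule ccontr)
    assume "\<phi> \<notin> RS5_logic TYPE('w)"
    then obtain W :: "'w set" and R V w where "rcc5_struct W R" "w \<in> W" "\<not> sat W R V w \<phi>"
      unfolding not_in_RS5_logic by blast
    then obtain \<rho> t where "refutation (Suc (gn \<phi>)) \<rho> t"
      using rcc5.countermodel_refutation[of W R] unfolding rcc5_def by blast
    with \<open>\<phi> \<in> RS5_logic TYPE(nat)\<close> show False
      using refutation_countermodel not_in_RS5_logic by blast
  qed
qed

lemma RS5_logic_nat_iff:
  "\<phi> \<in> RS5_logic TYPE(nat) \<longleftrightarrow> (\<exists>N. \<forall>\<rho> t. \<not> partial_refutation (Suc (gn \<phi>)) N \<rho> t)"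
proof
  assume "\<phi> \<in> RS5_logic TYPE(nat)"
  then have "\<not> refutation (Suc (gn \<phi>)) \<rho> t" for \<rho> t
    using refutation_countermodel not_in_RS5_logic by blast
  then show "\<exists>N. \<forall>\<rho> t. \<not> partial_refutation (Suc (gn \<phi>)) N \<rho> t"
    using compactness[of "Suc (gn \<phi>)"] by blast
next
  assume "\<exists>N. \<forall>\<rho> t. \<not> partial_refutation (Suc (gn \<phi>)) N \<rho> t"
  then show "\<phi> \<in> RS5_logic TYPE(nat)"
    using rcc5.countermodel_refutation not_in_RS5_logic refutation.partial_refutation
    unfolding rcc5_def by metis
qed

lemma T_reg_interior_nonempty: "s \<in> T_reg T \<Longrightarrow> T interior_of s \<noteq> {}"
  unfolding T_reg_def reg_closed_def using closure_of_empty by fastforce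

lemma top_rel_unique:
  assumes "T interior_of s \<noteq> {}" "T interior_of t \<noteq> {}" "top_rel T r s t" "top_rel T r' s t"
  shows "r = r'"
  using assms interior_of_mono[of s t T] interior_of_mono[of t s T]
  by (cases r; cases r') (auto simp: top_rel_def)

lemma top_rel_exists: "\<exists>r. top_rel T r s t"
proof -
  consider "s = t" | "s \<subseteq> t" "s \<noteq> t" | "t \<subseteq> s" "s \<noteq> t"
    | "\<not> s \<subseteq> t" "\<not> t \<subseteq> s" "T interior_of s \<inter> T interior_of t = {}"
    | "\<not> s \<subseteq> t" "\<not> t \<subseteq> s" "T interior_of s \<inter> T interior_of t \<noteq> {}"
    by blast
  then show ?thesis
  proof cases
    case 1
    then show ?thesis by (intro exI[of _ EQ]) (simp add: top_rel_def)
  next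
    case 2
    then show ?thesis by (intro exI[of _ PP]) (simp add: top_rel_def)
  next
    case 3
    then show ?thesis by (intro exI[of _ PPI]) (simp add: top_rel_def)
  next
    case 4
    then show ?thesis by (intro exI[of _ DR]) (simp add: top_rel_def)
  next
    case 5
    then show ?thesis by (intro exI[of _ PO]) (simp add: top_rel_def)
  qed
qed

text \<open>The composition table only needs the following consequences of the relations, where
  inclusion is strengthened to inclusion of the interiors as well.\<close>
definition top_rel_interiors :: "'a topology \<Rightarrow> rel5 \<Rightarrow> 'a set \<Rightarrow> 'a set \<Rightarrow> bool" where
  "top_rel_interiors T r s t = (case r of
      EQ \<Rightarrow> s = t
    | PO \<Rightarrow> T interior_of s \<inter> T interior_of t \<noteq> {} \<and> \<not> s \<subseteq> t \<and> \<not> t \<subseteq> s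
    | DR \<Rightarrow> T interior_of s \<inter> T interior_of t = {}
    | PP \<Rightarrow> s \<subseteq> t \<and> s \<noteq> t \<and> T interior_of s \<subseteq> T interior_of t
    | PPI \<Rightarrow> t \<subseteq> s \<and> s \<noteq> t \<and> T interior_of t \<subseteq> T interior_of s)"

lemma top_rel_interiors: "top_rel T r s t \<Longrightarrow> top_rel_interiors T r s t"
  by (cases r) (simp_all add: top_rel_def top_rel_interiors_def interior_of_mono)

lemma top_rel_interiors_comp5:
  assumes "r \<noteq> EQ" "s \<noteq> EQ" "T interior_of x \<noteq> {}" "T interior_of y \<noteq> {}" "T interior_of z \<noteq> {}"
    "top_rel_interiors T r x y" "top_rel_interiors T s y z" "top_rel_interiors T q x z"
  shows "q \<in> comp5 r s"
  using assms by (cases r; cases s; cases q) (auto simp: top_rel_interiors_def)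

lemma top_rel_comp5:
  assumes interiors: "T interior_of x \<noteq> {}" "T interior_of y \<noteq> {}" "T interior_of z \<noteq> {}"
    and r: "top_rel T r x y" and s: "top_rel T s y z" and q: "top_rel T q x z"
  shows "q \<in> comp5 r s"
proof (cases "r = EQ \<or> s = EQ")
  case True
  then show ?thesis
  proof
    assume "r = EQ"
    with r q have "top_rel T q y z"
      by (simp add: top_rel_def)
    with \<open>r = EQ\<close> show ?thesis
      using top_rel_unique[OF interiors(2,3) _ s] by simp
  next
    assume "s = EQ"
    with s q have "top_rel T q x y"
      by (simp add: top_rel_def)
    with \<open>s = EQ\<close> show ?thesis
      using top_rel_unique[OF interiors(1,2) _ r] by simp
  qed
next
  case False
  then show ?thesis
    using top_rel_interiors_comp5[OF _ _ interiors top_rel_interiors[OF r] top_rel_interiors[OF s]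
        top_rel_interiors[OF q]] by blast
qed

lemma rcc5_struct_top_rel:
  assumes "W \<noteq> {}" "W \<subseteq> T_reg T"
  shows "rcc5_struct W (top_rel T)"
  unfolding rcc5_struct_def
proof (intro conjI ballI allI impI)
  show "W \<noteq> {}" by fact
next
  fix x y assume "x \<in> W" "y \<in> W"
  then have interiors: "T interior_of x \<noteq> {}" "T interior_of y \<noteq> {}"
    using assms(2) T_reg_interior_nonempty by auto
  obtain r where "top_rel T r x y"
    using top_rel_exists by blast
  then show "\<exists>!r. top_rel T r x y"
    using top_rel_unique[OF interiors] by blast
  show "top_rel T EQ x y \<longleftrightarrow> x = y"
    by (simp add: top_rel_def)
  show "top_rel T PO x y \<longleftrightarrow> top_rel T PO y x"
    by (auto simp: top_rel_def)
  show "top_rel T DR x y \<longleftrightarrow> top_rel T DR y x"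
    by (auto simp: top_rel_def)
  show "top_rel T PP x y \<longleftrightarrow> top_rel T PPI y x"
    by (auto simp: top_rel_def)
next
  fix x y z r s assume "x \<in> W" "y \<in> W" "z \<in> W" and rs: "top_rel T r x y" "top_rel T s y z"
  then have interiors: "T interior_of x \<noteq> {}" "T interior_of y \<noteq> {}" "T interior_of z \<noteq> {}"
    using assms(2) T_reg_interior_nonempty by auto
  obtain q where "top_rel T q x z"
    using top_rel_exists by blast
  then show "\<exists>q\<in>comp5 r s. top_rel T q x z"
    using top_rel_comp5[OF interiors rs] by blast
qed

lemma RS5_logic_nat_valid_regions:
  assumes "\<phi> \<in> RS5_logic TYPE(nat)" "W \<noteq> {}" "W \<subseteq> T_reg T"
  shows "valid_frame W (top_rel T) \<phi>"
  using RS5_logic_nat_subset[where 'w = "'a set"] rcc5_struct_top_rel[OF assms(2,3)] assms(1)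
  unfolding RS5_logic_def by blast

section \<open>Representing RCC5 structures by regular closed sets\<close>

definition set_rel5 :: "rel5 \<Rightarrow> 'a set \<Rightarrow> 'a set \<Rightarrow> bool" where
  "set_rel5 r A B = (case r of
      EQ \<Rightarrow> A = B
    | PO \<Rightarrow> A \<inter> B \<noteq> {} \<and> \<not> A \<subseteq> B \<and> \<not> B \<subseteq> A
    | DR \<Rightarrow> A \<inter> B = {}
    | PP \<Rightarrow> A \<subset> B
    | PPI \<Rightarrow> B \<subset> A)"

lemma set_rel5_unique: "A \<noteq> {} \<Longrightarrow> B \<noteq> {} \<Longrightarrow> set_rel5 r A B \<Longrightarrow> set_rel5 r' A B \<Longrightarrow> r = r'"
  by (cases r; cases r') (auto simp: set_rel5_def)

context rcc5
begin

definition part_of :: "'w \<Rightarrow> 'w \<Rightarrow> bool" where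
  "part_of a x \<longleftrightarrow> a = x \<or> R PP a x"

text \<open>A region is represented by the pairs of non-disjoint regions one of which is part of it.
  Parts of disjoint regions are disjoint, which makes the representations of disjoint regions
  disjoint; the pair \<open>(x, x)\<close> separates \<open>x\<close> from the regions it is not part of.\<close>
definition pair_rep :: "'w \<Rightarrow> ('w \<times> 'w) set" where
  "pair_rep x = {(a, b). a \<in> W \<and> b \<in> W \<and> \<not> R DR a b \<and> (part_of a x \<or> part_of b x)}"

lemma part_of_PP: "a \<in> W \<Longrightarrow> x \<in> W \<Longrightarrow> y \<in> W \<Longrightarrow> part_of a x \<Longrightarrow> R PP x y \<Longrightarrow> R PP a y"
  unfolding part_of_def using composition[of a x y PP PP] by auto

lemma part_of_DR: "a \<in> W \<Longrightarrow> x \<in> W \<Longrightarrow> y \<in> W \<Longrightarrow> part_of a x \<Longrightarrow> R DR x y \<Longrightarrow> R DR a y"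
  unfolding part_of_def using composition[of a x y PP DR] by auto

lemma not_part_of_DR: "a \<in> W \<Longrightarrow> y \<in> W \<Longrightarrow> R DR a y \<Longrightarrow> \<not> part_of a y"
  unfolding part_of_def using rel_unique EQ_iff by fastforce

lemma self_in_pair_rep: "x \<in> W \<Longrightarrow> (x, x) \<in> pair_rep x"
  unfolding pair_rep_def part_of_def using rel_unique EQ_iff by fastforce

lemma self_in_pair_rep_iff: "x \<in> W \<Longrightarrow> (x, x) \<in> pair_rep y \<longleftrightarrow> part_of x y"
  unfolding pair_rep_def using rel_unique EQ_iff by fastforce

lemma pair_rep_PP:
  assumes "x \<in> W" "y \<in> W" "R PP x y"
  shows "pair_rep x \<subset> pair_rep y"
proof
  show "pair_rep x \<subseteq> pair_rep y"
    unfolding pair_rep_def using part_of_PP[OF _ assms(1,2) _ assms(3)] part_of_def by auto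
  have "\<not> part_of y x"
    unfolding part_of_def using assms rel_unique EQ_iff PP_iff_PPI by (metis rel5.distinct(13,19))
  then show "pair_rep x \<noteq> pair_rep y"
    using self_in_pair_rep[OF assms(2)] self_in_pair_rep_iff[OF assms(2)] by blast
qed

lemma pair_rep_DR:
  assumes "x \<in> W" "y \<in> W" "R DR x y"
  shows "pair_rep x \<inter> pair_rep y = {}"
proof (rule ccontr)
  have parts_DR: "R DR a b" if "a \<in> W" "b \<in> W" "part_of a x" "part_of b y" for a b
  proof -
    have "R DR y a"
      using part_of_DR[OF that(1) assms(1,2) that(3) assms(3)] DR_sym that(1) assms(2) by blast
    then have "R DR b a"
      by (rule part_of_DR[OF that(2) assms(2) that(1) that(4)])
    then show ?thesis
      using DR_sym that(1,2) by blast
  qed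
  assume "pair_rep x \<inter> pair_rep y \<noteq> {}"
  then obtain a b where ab: "a \<in> W" "b \<in> W" "\<not> R DR a b"
    "part_of a x \<or> part_of b x" "part_of a y \<or> part_of b y"
    unfolding pair_rep_def by blast
  moreover have "\<not> R DR a a" "\<not> R DR b b"
    using not_part_of_DR ab(1,2) part_of_def by blast+
  moreover have "\<not> R DR b a"
    using ab(1-3) DR_sym by blast
  ultimately show False
    using parts_DR by blast
qed

lemma pair_rep_PO:
  assumes "x \<in> W" "y \<in> W" "R PO x y"
  shows "pair_rep x \<inter> pair_rep y \<noteq> {}" "\<not> pair_rep x \<subseteq> pair_rep y" "\<not> pair_rep y \<subseteq> pair_rep x"
proof -
  have "\<not> R DR x y" "R PO y x"
    using assms rel_unique PO_sym by blast+
  then have "(x, y) \<in> pair_rep x \<inter> pair_rep y"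
    unfolding pair_rep_def part_of_def using assms by blast
  then show "pair_rep x \<inter> pair_rep y \<noteq> {}"
    by blast
  have "\<not> part_of x y" "\<not> part_of y x"
    unfolding part_of_def using assms \<open>R PO y x\<close> rel_unique EQ_iff by (metis rel5.distinct)+
  then show "\<not> pair_rep x \<subseteq> pair_rep y" "\<not> pair_rep y \<subseteq> pair_rep x"
    using self_in_pair_rep self_in_pair_rep_iff assms(1,2) by blast+
qed

lemma set_rel5_pair_rep_iff:
  assumes "x \<in> W" "y \<in> W"
  shows "set_rel5 r (pair_rep x) (pair_rep y) \<longleftrightarrow> R r x y"
proof -
  obtain r0 where r0: "R r0 x y"
    using ex1_rel[OF assms] by blast
  have "set_rel5 r0 (pair_rep x) (pair_rep y)"
  proof (cases r0)
    case PPI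
    then have "R PP y x"
      using r0 PP_iff_PPI assms by blast
    then show ?thesis
      using pair_rep_PP assms PPI by (simp add: set_rel5_def)
  qed (use r0 assms EQ_iff pair_rep_PO pair_rep_DR pair_rep_PP in \<open>auto simp: set_rel5_def\<close>)
  moreover have "pair_rep x \<noteq> {}" "pair_rep y \<noteq> {}"
    using self_in_pair_rep assms by blast+
  ultimately show ?thesis
    using set_rel5_unique rel_unique[OF assms _ r0] r0 by metis
qed

end

locale disjoint_open_family =
  fixes U :: "'i \<Rightarrow> 'a :: topological_space set"
  assumes open_U: "open (U i)" and U_nonempty: "U i \<noteq> {}" and U_disjoint: "i \<noteq> j \<Longrightarrow> U i \<inter> U j = {}"
begin

definition closure_Union :: "'i set \<Rightarrow> 'a set" where
  "closure_Union S = closure (\<Union>i\<in>S. U i)"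

lemma open_Union: "open (\<Union>i\<in>S. U i)"
  using open_U by blast

lemma reg_closed_closure_Union: "reg_closed euclidean (closure_Union S)"
proof -
  have "closure (interior (closure (\<Union>i\<in>S. U i))) = closure (\<Union>i\<in>S. U i)"
  proof
    show "closure (interior (closure (\<Union>i\<in>S. U i))) \<subseteq> closure (\<Union>i\<in>S. U i)"
      by (simp add: closure_minimal interior_subset)
    show "closure (\<Union>i\<in>S. U i) \<subseteq> closure (interior (closure (\<Union>i\<in>S. U i)))"
      by (intro closure_mono interior_maximal closure_subset open_Union)
  qed
  then show ?thesis
    by (simp add: reg_closed_def closure_Union_def euclidean_closure_of euclidean_interior_of)
qed

lemma U_subset_closure_Union: "i \<in> S \<Longrightarrow> U i \<subseteq> closure_Union S"
  unfolding closure_Union_def by (rule order_trans[OF UN_upper closure_subset])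

lemma U_disjoint_closure_Union:
  assumes "i \<notin> S"
  shows "U i \<inter> closure_Union S = {}"
proof -
  have "U i \<inter> U j = {}" if "j \<in> S" for j
  proof -
    from assms that have "i \<noteq> j"
      by blast
    then show ?thesis
      by (rule U_disjoint)
  qed
  then have "U i \<inter> (\<Union>j\<in>S. U j) = {}"
    by (simp add: Int_UN_distrib)
  then show ?thesis
    unfolding closure_Union_def by (simp add: open_Int_closure_eq_empty[OF open_U])
qed

lemma closure_Union_nonempty_iff: "closure_Union S \<noteq> {} \<longleftrightarrow> S \<noteq> {}"
  using U_subset_closure_Union U_nonempty by (auto simp: closure_Union_def)

lemma closure_Union_subset_iff: "closure_Union S \<subseteq> closure_Union S' \<longleftrightarrow> S \<subseteq> S'"
proof
  assume sub: "closure_Union S \<subseteq> closure_Union S'"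
  show "S \<subseteq> S'"
  proof
    fix i assume "i \<in> S"
    show "i \<in> S'"
    proof (rule ccontr)
      assume "i \<notin> S'"
      then have "U i \<inter> closure_Union S' = {}"
        by (rule U_disjoint_closure_Union)
      moreover have "U i \<subseteq> closure_Union S'"
        using U_subset_closure_Union[OF \<open>i \<in> S\<close>] sub by (rule order_trans)
      ultimately show False
        using U_nonempty by blast
    qed
  qed
next
  assume "S \<subseteq> S'"
  then show "closure_Union S \<subseteq> closure_Union S'"
    unfolding closure_Union_def by (intro closure_mono UN_mono) auto
qed

lemma closure_Union_eq_iff: "closure_Union S = closure_Union S' \<longleftrightarrow> S = S'"
  using closure_Union_subset_iff[of S S'] closure_Union_subset_iff[of S' S] by auto

lemma interior_closure_Union_disjoint_iff:
  "interior (closure_Union S) \<inter> interior (closure_Union S') = {} \<longleftrightarrow> S \<inter> S' = {}"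
proof
  assume "S \<inter> S' = {}"
  then have "interior (closure_Union S) \<inter> (\<Union>i\<in>S'. U i) = {}"
    using interior_subset U_disjoint_closure_Union by blast
  then have "interior (closure_Union S) \<inter> closure_Union S' = {}"
    unfolding closure_Union_def by (simp add: open_Int_closure_eq_empty)
  then show "interior (closure_Union S) \<inter> interior (closure_Union S') = {}"
    using interior_subset by blast
next
  assume "interior (closure_Union S) \<inter> interior (closure_Union S') = {}"
  moreover have "U i \<subseteq> interior (closure_Union S)" if "i \<in> S" for i S
    using interior_maximal[OF U_subset_closure_Union[OF that] open_U] .
  ultimately show "S \<inter> S' = {}"
    using U_nonempty by blast
qed

lemma top_rel_closure_Union_iff:
  "top_rel euclidean r (closure_Union S) (closure_Union S') \<longleftrightarrow> set_rel5 r S S'"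
  unfolding top_rel_def set_rel5_def euclidean_interior_of
  by (cases r) (simp_all add: closure_Union_subset_iff closure_Union_eq_iff
      interior_closure_Union_disjoint_iff psubset_eq, blast)

end

lemma disjoint_open_family_reindex:
  assumes "disjoint_open_family U" "inj f"
  shows "disjoint_open_family (U \<circ> f)"
proof -
  interpret disjoint_open_family U by fact
  show ?thesis
    using U_disjoint assms(2) by unfold_locales (simp_all add: open_U U_nonempty inj_eq)
qed

lemma disjoint_open_family_balls:
  "disjoint_open_family (\<lambda>k :: nat. ball (real k *\<^sub>R (SOME b. b \<in> (Basis :: 'a :: euclidean_space set))) (1/2))"
proof
  let ?b = "SOME b. b \<in> (Basis :: 'a set)"
  fix k j :: nat
  show "open (ball (real k *\<^sub>R ?b) (1/2))" "ball (real k *\<^sub>R ?b) (1/2) \<noteq> {}"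
    by simp_all
  assume "k \<noteq> j"
  then have far: "1 \<le> dist (real k *\<^sub>R ?b) (real j *\<^sub>R ?b)"
    by (simp add: dist_norm flip: scaleR_diff_left)
  show "ball (real k *\<^sub>R ?b) (1/2) \<inter> ball (real j *\<^sub>R ?b) (1/2) = {}"
  proof (rule equals0I)
    fix x assume "x \<in> ball (real k *\<^sub>R ?b) (1/2) \<inter> ball (real j *\<^sub>R ?b) (1/2)"
    then have "dist (real k *\<^sub>R ?b) (real j *\<^sub>R ?b) < 1"
      using dist_triangle_half_l[of "real k *\<^sub>R ?b" x 1 "real j *\<^sub>R ?b"] by simp
    with far show False
      by simp
  qed
qed

lemma sat_embedding:
  assumes "inj_on h W" "\<And>x y r. x \<in> W \<Longrightarrow> y \<in> W \<Longrightarrow> R' r (h x) (h y) \<longleftrightarrow> R r x y" "x \<in> W"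
  shows "sat (h ` W) R' (\<lambda>p. h ` (V p \<inter> W)) (h x) \<psi> \<longleftrightarrow> sat W R V x \<psi>"
  using assms(3)
proof (induction \<psi> arbitrary: x)
  case (Atom p)
  then show ?case using assms(1) by (auto simp: inj_on_image_mem_iff)
next
  case (Box r \<psi>)
  then show ?case using assms(2) by auto
qed auto

lemma valid_frame_embedding:
  assumes "valid_frame (h ` W) R' \<phi>" "inj_on h W"
    and rel: "\<And>x y r. x \<in> W \<Longrightarrow> y \<in> W \<Longrightarrow> R' r (h x) (h y) \<longleftrightarrow> R r x y"
  shows "valid_frame W R \<phi>"
  unfolding valid_frame_def
proof (intro allI ballI)
  fix V x assume "x \<in> W"
  then have "sat (h ` W) R' (\<lambda>p. h ` (V p \<inter> W)) (h x) \<phi>"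
    using assms(1) unfolding valid_frame_def by blast
  then show "sat W R V x \<phi>"
    using sat_embedding[where h = h and W = W and R' = R' and R = R, OF assms(2) rel \<open>x \<in> W\<close>] by blast
qed

lemma (in rcc5) valid_frame_from_regions:
  fixes U :: "'w \<times> 'w \<Rightarrow> 'a :: topological_space set"
  assumes "disjoint_open_family U"
    and valid: "\<And>W' :: 'a set set. W' \<noteq> {} \<Longrightarrow> W' \<subseteq> T_reg euclidean \<Longrightarrow> valid_frame W' (top_rel euclidean) \<phi>"
  shows "valid_frame W R \<phi>"
proof -
  interpret disjoint_open_family U by fact
  let ?h = "\<lambda>x. closure_Union (pair_rep x)"
  have rel: "top_rel euclidean r (?h x) (?h y) \<longleftrightarrow> R r x y" if "x \<in> W" "y \<in> W" for x y r
    using top_rel_closure_Union_iff set_rel5_pair_rep_iff[OF that] by simp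
  have "inj_on ?h W"
    by (rule inj_onI) (use rel[of _ _ EQ] EQ_iff in \<open>auto simp: top_rel_def\<close>)
  moreover have "pair_rep x \<noteq> {}" if "x \<in> W" for x
    using self_in_pair_rep[OF that] by blast
  then have "?h ` W \<subseteq> T_reg euclidean"
    using reg_closed_closure_Union closure_Union_nonempty_iff by (auto simp: T_reg_def)
  ultimately show ?thesis
    using valid[of "?h ` W"] nonempty rel by (blast intro: valid_frame_embedding)
qed

lemma Rn_logic_subset_RS5_logic_nat: "Rn_logic TYPE('n::finite) \<subseteq> RS5_logic TYPE(nat)"
proof
  fix \<phi> assume "\<phi> \<in> Rn_logic TYPE('n)"
  then have valid: "valid_frame W' (top_rel euclidean) \<phi>"
    if "W' \<noteq> {}" "W' \<subseteq> T_reg euclidean" for W' :: "(real ^ 'n) set set"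
    using that unfolding Rn_logic_def by blast
  define U :: "nat \<times> nat \<Rightarrow> (real ^ 'n) set"
    where "U = (\<lambda>k. ball (real k *\<^sub>R (SOME b. b \<in> Basis)) (1/2)) \<circ> prod_encode"
  have U: "disjoint_open_family U"
    unfolding U_def using disjoint_open_family_balls inj_prod_encode by (rule disjoint_open_family_reindex)
  show "\<phi> \<in> RS5_logic TYPE(nat)"
    unfolding RS5_logic_def
  proof (intro CollectI allI impI)
    fix W :: "nat set" and R assume "rcc5_struct W R"
    then show "valid_frame W R \<phi>"
      using rcc5.valid_frame_from_regions[OF rcc5.intro U valid] by blast
  qed
qed

section \<open>Partial recursive functions and bounded arithmetic\<close>

inductive_cases eval_ZfE: "eval Zf xs y"
inductive_cases eval_SfE: "eval Sf xs y"
inductive_cases eval_PfE: "eval (Pf i) xs y"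
inductive_cases eval_CnE: "eval (Cn f gs) xs y"
inductive_cases eval_PrE: "eval (Pr f g) xs y"
inductive_cases eval_MnE: "eval (Mn f) xs y"

lemma eval_deterministic: "eval f xs y \<Longrightarrow> eval f xs y' \<Longrightarrow> y = y'"
proof (induction arbitrary: y' rule: eval.induct)
  case (ev_Cn xs gs ys f z)
  from ev_Cn.prems obtain ys' where gs: "list_all2 (\<lambda>g y. eval g xs y) gs ys'" and f: "eval f ys' y'"
    by (auto elim: eval_CnE)
  from ev_Cn.IH(1) gs have "ys = ys'"
    by (auto simp: list_all2_conv_all_nth intro!: nth_equalityI)
  with ev_Cn.IH(2) f show ?case by auto
next
  case (ev_Pr0 f xs z g)
  from ev_Pr0.prems show ?case by (cases rule: eval_PrE) (use ev_Pr0.IH in auto)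
next
  case (ev_PrS f g n xs r z)
  from ev_PrS.prems show ?case by (cases rule: eval_PrE) (use ev_PrS.IH in auto)
next
  case (ev_Mn f y xs)
  from ev_Mn.prems have zero: "eval f (y' # xs) 0" and pos: "\<forall>z<y'. \<exists>m. eval f (z # xs) (Suc m)"
    by (auto elim: eval_MnE)
  show ?case
  proof (rule linorder_cases[of y y'])
    assume "y < y'"
    with pos ev_Mn.IH(1) show ?thesis by blast
  next
    assume "y' < y"
    with zero ev_Mn.IH(2) show ?thesis by blast
  qed
qed (auto elim: eval_ZfE eval_SfE eval_PfE)

lemma eval_Pf: "i < length xs \<Longrightarrow> z = xs ! i \<Longrightarrow> eval (Pf i) xs z"
  using ev_P by simp

lemma eval_Sf: "z = Suc x \<Longrightarrow> eval Sf (x # xs) z"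
  using ev_S by simp

lemma eval_Cn1: "eval g xs y \<Longrightarrow> eval f [y] z \<Longrightarrow> eval (Cn f [g]) xs z"
  by (rule ev_Cn[of _ _ "[y]"]) auto

lemma eval_Cn2: "eval g1 xs y1 \<Longrightarrow> eval g2 xs y2 \<Longrightarrow> eval f [y1, y2] z \<Longrightarrow> eval (Cn f [g1, g2]) xs z"
  by (rule ev_Cn[of _ _ "[y1, y2]"]) auto

lemma eval_Pr:
  assumes "eval f xs (h 0)" "\<And>n. eval g (h n # n # xs) (h (Suc n))"
  shows "eval (Pr f g) (n # xs) (h n)"
  by (induction n) (use assms in \<open>auto intro: ev_Pr0 ev_PrS\<close>)

fun rf_const :: "nat \<Rightarrow> recf" where
  "rf_const 0 = Zf"
| "rf_const (Suc n) = Cn Sf [rf_const n]"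

lemma eval_rf_const: "eval (rf_const n) xs n"
  by (induction n) (auto intro: ev_Z eval_Cn1 eval_Sf)

declare rf_const.simps [simp del]

definition "rf_add = Pr (Pf 0) (Cn Sf [Pf 0])"

lemma eval_rf_add: "z = x + y \<Longrightarrow> eval rf_add [x, y] z"
  unfolding rf_add_def
  by (simp, rule eval_Pr[where h = "\<lambda>n. n + y"]) (auto intro!: eval_Pf eval_Cn1 eval_Sf)

definition "rf_mult = Pr Zf (Cn rf_add [Pf 0, Pf 2])"

lemma eval_rf_mult: "z = x * y \<Longrightarrow> eval rf_mult [x, y] z"
  unfolding rf_mult_def
  by (simp, rule eval_Pr[where h = "\<lambda>n. n * y"]) (auto intro!: eval_Pf eval_Cn2 ev_Z eval_rf_add)

definition "rf_pred = Pr Zf (Pf 1)"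

lemma eval_rf_pred: "z = x - 1 \<Longrightarrow> eval rf_pred [x] z"
  unfolding rf_pred_def
  by (hypsubst, rule eval_Pr[where h = "\<lambda>n. n - 1"]) (auto intro!: eval_Pf ev_Z)

text \<open>Primitive recursion runs on the first argument, so the recursion computes \<open>x - y\<close>
  from \<open>[y, x]\<close> and the arguments are swapped afterwards.\<close>
definition "rf_diff = Cn (Pr (Pf 0) (Cn rf_pred [Pf 0])) [Pf 1, Pf 0]"

lemma eval_rf_diff: "z = x - y \<Longrightarrow> eval rf_diff [x, y] z"
proof -
  have "eval (Pr (Pf 0) (Cn rf_pred [Pf 0])) [y, x] (x - y)"
    by (rule eval_Pr[where h = "\<lambda>n. x - n"]) (auto intro!: eval_Pf eval_Cn1 eval_rf_pred)
  then show "z = x - y \<Longrightarrow> eval rf_diff [x, y] z"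
    unfolding rf_diff_def by (auto intro!: eval_Cn2 eval_Pf)
qed

definition "rf_eq = Cn rf_diff [rf_const 1, Cn rf_add [rf_diff, Cn rf_diff [Pf 1, Pf 0]]]"

lemma eval_rf_eq: "z = (if x = y then 1 else 0) \<Longrightarrow> eval rf_eq [x, y] z"
proof -
  have "eval (Cn rf_add [rf_diff, Cn rf_diff [Pf 1, Pf 0]]) [x, y] ((x - y) + (y - x))"
    by (auto intro!: eval_Cn2 eval_Pf eval_rf_diff eval_rf_add)
  then show "z = (if x = y then 1 else 0) \<Longrightarrow> eval rf_eq [x, y] z"
    unfolding rf_eq_def by (auto intro!: eval_Cn2[OF eval_rf_const] eval_rf_diff)
qed

definition "rf_power = Pr (rf_const 1) (Cn rf_mult [Pf 0, Pf 2])"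

lemma eval_rf_power: "z = x ^ y \<Longrightarrow> eval rf_power [y, x] z"
  unfolding rf_power_def
  by (hypsubst, rule eval_Pr[where h = "\<lambda>n. x ^ n"])
    (auto intro!: eval_Pf eval_Cn2 eval_rf_mult eval_rf_const)

text \<open>Both recursions run along \<open>n = 0, 1, \<dots>, x - 1\<close>: the remainder \<open>r\<close> of \<open>n\<close> steps to
  \<open>Suc r\<close> unless that equals \<open>y\<close>, and the quotient grows exactly when it does.\<close>
definition "rf_mod = Pr Zf (Cn rf_mult [Cn rf_diff [rf_const 1, Cn rf_eq [Cn Sf [Pf 0], Pf 2]], Cn Sf [Pf 0]])"

lemma eval_rf_mod: "z = x mod y \<Longrightarrow> eval rf_mod [x, y] z"
  unfolding rf_mod_def
  by (hypsubst, rule eval_Pr[where h = "\<lambda>n. n mod y"])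
    (auto intro!: eval_Pf eval_Cn2 eval_Cn1 eval_rf_mult eval_rf_const eval_rf_diff eval_rf_eq
      eval_Sf ev_Z simp: mod_Suc)

definition "rf_div = Pr Zf (Cn rf_add [Pf 0, Cn rf_eq [Cn Sf [Cn rf_mod [Pf 1, Pf 2]], Pf 2]])"

lemma eval_rf_div: "z = x div y \<Longrightarrow> eval rf_div [x, y] z"
proof -
  have step: "Suc n div y = n div y + (if Suc (n mod y) = y then 1 else 0)" for n
    by (auto simp: div_Suc mod_Suc)
  show "z = x div y \<Longrightarrow> eval rf_div [x, y] z"
    unfolding rf_div_def
    by (hypsubst, rule eval_Pr[where h = "\<lambda>n. n div y"])
      (auto simp: step intro!: eval_Pf eval_Cn2 eval_Cn1 eval_rf_add eval_rf_const eval_rf_mod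
        eval_rf_eq eval_Sf ev_Z)
qed

datatype aterm = AVar nat | AConst nat | AAdd aterm aterm | AMul aterm aterm | ASub aterm aterm
  | ADiv aterm aterm | AMod aterm aterm | APow aterm aterm

text \<open>\<open>AAll t \<phi>\<close> is the bounded quantifier \<open>\<forall>x < t. \<phi>\<close>.\<close>
datatype aform = AEq aterm aterm | ALe aterm aterm | ANot aform | AAnd aform aform | AAll aterm aform

text \<open>The environment lists the values of the variables innermost first, while \<open>AVar i\<close>
  counts from the outermost one: \<open>AVar i\<close> keeps denoting the same variable below further
  binders. Unbound variables denote \<open>0\<close>.\<close>
fun aval :: "nat list \<Rightarrow> aterm \<Rightarrow> nat" where
  "aval e (AVar i) = (if i < length e then e ! (length e - Suc i) else 0)"
| "aval e (AConst n) = n"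
| "aval e (AAdd a b) = aval e a + aval e b"
| "aval e (AMul a b) = aval e a * aval e b"
| "aval e (ASub a b) = aval e a - aval e b"
| "aval e (ADiv a b) = aval e a div aval e b"
| "aval e (AMod a b) = aval e a mod aval e b"
| "aval e (APow a b) = aval e a ^ aval e b"

fun asat :: "nat list \<Rightarrow> aform \<Rightarrow> bool" where
  "asat e (AEq a b) = (aval e a = aval e b)"
| "asat e (ALe a b) = (aval e a \<le> aval e b)"
| "asat e (ANot \<phi>) = (\<not> asat e \<phi>)"
| "asat e (AAnd \<phi> \<psi>) = (asat e \<phi> \<and> asat e \<psi>)"
| "asat e (AAll t \<phi>) = (\<forall>x < aval e t. asat (x # e) \<phi>)"

fun compile_aterm :: "nat \<Rightarrow> aterm \<Rightarrow> recf" where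
  "compile_aterm k (AVar i) = (if i < k then Pf (k - Suc i) else Zf)"
| "compile_aterm k (AConst n) = rf_const n"
| "compile_aterm k (AAdd a b) = Cn rf_add [compile_aterm k a, compile_aterm k b]"
| "compile_aterm k (AMul a b) = Cn rf_mult [compile_aterm k a, compile_aterm k b]"
| "compile_aterm k (ASub a b) = Cn rf_diff [compile_aterm k a, compile_aterm k b]"
| "compile_aterm k (ADiv a b) = Cn rf_div [compile_aterm k a, compile_aterm k b]"
| "compile_aterm k (AMod a b) = Cn rf_mod [compile_aterm k a, compile_aterm k b]"
| "compile_aterm k (APow a b) = Cn rf_power [compile_aterm k b, compile_aterm k a]"

text \<open>The bounded quantifier becomes the product, by primitive recursion on the bound, of the
  truth values of the body; the body sees the environment \<open>x # e\<close>, which is reassembled from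
  the recursion arguments \<open>[r, x] @ e\<close>.\<close>
fun compile_aform :: "nat \<Rightarrow> aform \<Rightarrow> recf" where
  "compile_aform k (AEq a b) = Cn rf_eq [compile_aterm k a, compile_aterm k b]"
| "compile_aform k (ALe a b) = Cn rf_diff [rf_const 1, Cn rf_diff [compile_aterm k a, compile_aterm k b]]"
| "compile_aform k (ANot \<phi>) = Cn rf_diff [rf_const 1, compile_aform k \<phi>]"
| "compile_aform k (AAnd \<phi> \<psi>) = Cn rf_mult [compile_aform k \<phi>, compile_aform k \<psi>]"
| "compile_aform k (AAll t \<phi>) =
     Cn (Pr (rf_const 1) (Cn rf_mult [Pf 0, Cn (compile_aform (Suc k) \<phi>) (map Pf [1..<k + 2])]))
        (compile_aterm k t # map Pf [0..<k])"

lemma eval_compile_aterm: "length e = k \<Longrightarrow> eval (compile_aterm k t) e (aval e t)"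
  by (induction t)
    (auto intro!: eval_Pf ev_Z eval_rf_const eval_Cn2 eval_rf_add eval_rf_mult eval_rf_diff
      eval_rf_div eval_rf_mod eval_rf_power)

lemma eval_map_Pf: "list_all2 (\<lambda>g y. eval g xs y) (map Pf [m..<length xs]) (drop m xs)"
  by (auto simp: list_all2_conv_all_nth intro!: eval_Pf)

lemma eval_compile_aform: "length e = k \<Longrightarrow> eval (compile_aform k \<phi>) e (if asat e \<phi> then 1 else 0)"
proof (induction \<phi> arbitrary: k e)
  case (AEq a b)
  then show ?case by (auto intro!: eval_Cn2 eval_compile_aterm eval_rf_eq)
next
  case (ALe a b)
  then have "eval (Cn rf_diff [compile_aterm k a, compile_aterm k b]) e (aval e a - aval e b)"
    by (auto intro!: eval_Cn2 eval_compile_aterm eval_rf_diff)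
  then show ?case
    by (auto intro!: eval_Cn2[OF eval_rf_const] eval_rf_diff)
next
  case (ANot \<phi>)
  then show ?case
    by (auto intro!: eval_Cn2[OF eval_rf_const] eval_rf_diff)
next
  case (AAnd \<phi> \<psi>)
  then show ?case by (auto intro!: eval_Cn2 eval_rf_mult)
next
  case (AAll t \<phi>)
  define h where "h n = (if \<forall>x<n. asat (x # e) \<phi> then 1 else 0 :: nat)" for n
  have body: "eval (Cn (compile_aform (Suc k) \<phi>) (map Pf [1..<k + 2])) (h n # n # e)
      (if asat (n # e) \<phi> then 1 else 0)" for n
  proof (rule ev_Cn)
    show "list_all2 (\<lambda>g y. eval g (h n # n # e) y) (map Pf [1..<k + 2]) (n # e)"
      using eval_map_Pf[where m = 1 and xs = "h n # n # e"] AAll.prems by simp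
    show "eval (compile_aform (Suc k) \<phi>) (n # e) (if asat (n # e) \<phi> then 1 else 0)"
      using AAll.IH[of "n # e" "Suc k"] AAll.prems by simp
  qed
  have recursion: "eval (Pr (rf_const 1) (Cn rf_mult [Pf 0, Cn (compile_aform (Suc k) \<phi>) (map Pf [1..<k + 2])]))
      (n # e) (h n)" for n
  proof (rule eval_Pr)
    show "eval (rf_const 1) e (h 0)"
      using eval_rf_const[of 1 e] by (simp add: h_def)
    show "eval (Cn rf_mult [Pf 0, Cn (compile_aform (Suc k) \<phi>) (map Pf [1..<k + 2])]) (h n # n # e) (h (Suc n))" for n
      by (rule eval_Cn2[OF eval_Pf body]) (auto simp: h_def less_Suc_eq intro!: eval_rf_mult)
  qed
  have args: "list_all2 (\<lambda>g y. eval g e y) (compile_aterm k t # map Pf [0..<k]) (aval e t # e)"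
    using eval_map_Pf[where m = 0 and xs = e] AAll.prems by (simp add: eval_compile_aterm)
  have "eval (compile_aform k (AAll t \<phi>)) e (h (aval e t))"
    unfolding compile_aform.simps by (rule ev_Cn[OF args recursion])
  then show ?case
    by (simp add: h_def)
qed

lemma r_enum_Sigma1:
  assumes "\<And>n. n \<in> A \<longleftrightarrow> (\<exists>N. asat [N, n] \<phi>)"
  shows "r_enum A"
  unfolding r_enum_def
proof (intro exI allI)
  fix n
  let ?test = "compile_aform 2 (ANot \<phi>)"
  have test: "eval ?test [N, n] (if asat [N, n] \<phi> then 0 else 1)" for N
    using eval_compile_aform[of "[N, n]" 2 "ANot \<phi>"] by (cases "asat [N, n] \<phi>") simp_all
  show "n \<in> A \<longleftrightarrow> (\<exists>y. eval (Mn ?test) [n] y)"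
  proof
    assume "n \<in> A"
    then have "\<exists>N. asat [N, n] \<phi>" using assms by blast
    define N where "N = (LEAST N. asat [N, n] \<phi>)"
    have "eval ?test [N, n] 0"
      using test[of N] LeastI_ex[OF \<open>\<exists>N. asat [N, n] \<phi>\<close>] by (simp add: N_def)
    moreover have "\<forall>z<N. \<exists>m. eval ?test [z, n] (Suc m)"
    proof (intro allI impI exI)
      fix z assume "z < N"
      then have "\<not> asat [z, n] \<phi>" unfolding N_def by (rule not_less_Least)
      then show "eval ?test [z, n] (Suc 0)" using test[of z] by simp
    qed
    ultimately show "\<exists>y. eval (Mn ?test) [n] y"
      by (blast intro: ev_Mn)
  next
    assume "\<exists>y. eval (Mn ?test) [n] y"
    then obtain N where "eval ?test [N, n] 0" by (auto elim: eval_MnE)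
    with test[of N] have "(if asat [N, n] \<phi> then 0 else 1) = (0 :: nat)"
      by (rule eval_deterministic)
    then have "asat [N, n] \<phi>" by (simp split: if_splits)
    then show "n \<in> A" using assms by blast
  qed
qed

definition "AOr \<phi> \<psi> = ANot (AAnd (ANot \<phi>) (ANot \<psi>))"
definition "AImp \<phi> \<psi> = ANot (AAnd \<phi> (ANot \<psi>))"
definition "AIff \<phi> \<psi> = AAnd (AImp \<phi> \<psi>) (AImp \<psi> \<phi>)"
definition "AEx t \<phi> = ANot (AAll t (ANot \<phi>))"
definition "ALt a b = ALe (AAdd a (AConst 1)) b"
definition "APair a b = AAdd (ADiv (AMul (AAdd a b) (AAdd (AAdd a b) (AConst 1))) (AConst 2)) a"
definition digit :: "nat \<Rightarrow> nat \<Rightarrow> nat \<Rightarrow> nat" where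
  "digit b a p = a div b ^ p mod b"

definition "ADigit d a p = AMod (ADiv a (APow (AConst d) p)) (AConst d)"

lemma asat_derived [simp]:
  "asat e (AOr \<phi> \<psi>) = (asat e \<phi> \<or> asat e \<psi>)"
  "asat e (AImp \<phi> \<psi>) = (asat e \<phi> \<longrightarrow> asat e \<psi>)"
  "asat e (AIff \<phi> \<psi>) = (asat e \<phi> \<longleftrightarrow> asat e \<psi>)"
  "asat e (AEx t \<phi>) = (\<exists>x < aval e t. asat (x # e) \<phi>)"
  "asat e (ALt a b) = (aval e a < aval e b)"
  unfolding AOr_def AImp_def AIff_def AEx_def ALt_def by auto

lemma aval_derived [simp]:
  "aval e (APair a b) = prod_encode (aval e a, aval e b)"
  "aval e (ADigit d a p) = digit d (aval e a) (aval e p)"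
  unfolding APair_def ADigit_def by (simp_all add: prod_encode_def triangle_def digit_def)

lemma exists_digits:
  assumes "0 < b" "\<forall>p<L. f p < b"
  shows "\<exists>a < b ^ L. \<forall>p<L. digit b a p = f p"
  using assms(2)
proof (induction L)
  case 0
  then show ?case by auto
next
  case (Suc L)
  then obtain a where a: "a < b ^ L" "\<forall>p<L. digit b a p = f p"
    by auto
  have "f L < b"
    using Suc.prems by simp
  define a' where "a' = a + f L * b ^ L"
  have "a' < b ^ Suc L"
  proof -
    have "a' < (f L + 1) * b ^ L"
      using a(1) by (simp add: a'_def)
    also have "\<dots> \<le> b * b ^ L"
      using \<open>f L < b\<close> by (intro mult_right_mono) auto
    finally show ?thesis by simp
  qed
  moreover have "digit b a' p = f p" if "p < Suc L" for p
  proof (cases "p = L")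
    case True
    then show ?thesis
      using a(1) assms(1) \<open>f L < b\<close> by (simp add: digit_def a'_def)
  next
    case False
    with that obtain q where q: "L = Suc (p + q)"
      using less_imp_Suc_add by fastforce
    have "a' = a + (f L * b ^ q * b) * b ^ p"
      unfolding a'_def q by (simp add: power_add mult_ac)
    then have "a' div b ^ p = a div b ^ p + (f L * b ^ q) * b"
      using assms(1) by simp
    then show ?thesis
      using a(2) q by (simp add: digit_def)
  qed
  ultimately show ?case by blast
qed

text \<open>A number is a formula code iff it belongs to a set of numbers, given by the binary digits
  of some \<open>s\<close>, each of which is an atom code or built from smaller members.\<close>
definition built_from :: "nat \<Rightarrow> nat \<Rightarrow> bool" where
  "built_from s c \<longleftrightarrow>
     (\<exists>p\<le>c. c = pair_code 0 p) \<or>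
     (\<exists>d<c. c = neg_code d \<and> digit 2 s d = 1) \<or>
     (\<exists>d<c. \<exists>e<c. c = conj_code d e \<and> digit 2 s d = 1 \<and> digit 2 s e = 1) \<or>
     (\<exists>r<5. \<exists>d<c. c = box_code r d \<and> digit 2 s d = 1)"

definition is_fm_code :: "nat \<Rightarrow> bool" where
  "is_fm_code n \<longleftrightarrow> (\<exists>s < 2 ^ Suc n. digit 2 s n = 1 \<and> (\<forall>c\<le>n. digit 2 s c = 1 \<longrightarrow> built_from s c))"

lemma built_from_gn:
  assumes "\<And>\<psi>. gn \<psi> < gn \<phi> \<Longrightarrow> digit 2 s (gn \<psi>) = 1"
  shows "built_from s (gn \<phi>)"
proof (cases \<phi>)
  case (Atom p)
  then show ?thesis
    using le_prod_encode_2[of p 0] by (auto simp: built_from_def)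
next
  case (Neg \<psi>)
  then show ?thesis
    using assms gn_subformula_less(1)[of \<psi>] by (auto simp: built_from_def)
next
  case (Conj \<psi> \<theta>)
  then show ?thesis
    using assms gn_subformula_less(2)[of \<psi> \<theta>] gn_subformula_less(3)[of \<theta> \<psi>]
    by (fastforce simp: built_from_def)
next
  case (Box r \<psi>)
  then show ?thesis
    using assms gn_subformula_less(4)[of \<psi> r] by (fastforce simp: built_from_def)
qed

lemma is_fm_code_gn: "is_fm_code (gn \<phi>)"
proof -
  let ?n = "gn \<phi>"
  have "\<forall>c<Suc ?n. (if c \<in> range gn then 1 else 0) < (2 :: nat)"
    by simp
  then obtain s where s: "s < 2 ^ Suc ?n" "\<forall>c<Suc ?n. digit 2 s c = (if c \<in> range gn then 1 else 0)"
    using exists_digits[of 2 "Suc ?n" "\<lambda>c. if c \<in> range gn then 1 else 0"] by auto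
  have marked: "digit 2 s c = 1 \<longleftrightarrow> c \<in> range gn" if "c \<le> ?n" for c
    using s(2) that by (simp add: less_Suc_eq_le)
  have "built_from s c" if c: "c \<le> ?n" "digit 2 s c = 1" for c
  proof -
    obtain \<psi> where \<psi>: "c = gn \<psi>"
      using marked c by blast
    have "digit 2 s (gn \<theta>) = 1" if "gn \<theta> < gn \<psi>" for \<theta>
      using marked \<psi> that \<open>c \<le> ?n\<close> by simp
    with \<psi> show ?thesis
      using built_from_gn by blast
  qed
  with s(1) marked show ?thesis
    unfolding is_fm_code_def by blast
qed

lemma is_fm_code_imp_gn: "is_fm_code n \<Longrightarrow> n \<in> range gn"
proof -
  assume "is_fm_code n"
  then obtain s where s: "digit 2 s n = 1" "\<And>c. c \<le> n \<Longrightarrow> digit 2 s c = 1 \<Longrightarrow> built_from s c"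
    unfolding is_fm_code_def by blast
  have "c \<le> n \<Longrightarrow> digit 2 s c = 1 \<Longrightarrow> c \<in> range gn" for c
  proof (induction c rule: less_induct)
    case (less c)
    then have IH: "d \<in> range gn" if "d < c" "digit 2 s d = 1" for d
      using that by simp
    from s(2)[OF less.prems] consider
        p where "c = pair_code 0 p"
      | d where "d < c" "c = neg_code d" "digit 2 s d = 1"
      | d e where "d < c" "e < c" "c = conj_code d e" "digit 2 s d = 1" "digit 2 s e = 1"
      | r d where "r < 5" "d < c" "c = box_code r d" "digit 2 s d = 1"
      unfolding built_from_def by blast
    then show ?case
    proof cases
      case 1
      then show ?thesis by (metis gn.simps(1) rangeI)
    next
      case (2 d)
      with IH obtain \<psi> where "d = gn \<psi>" by blast
      with 2 show ?thesis by (metis One_nat_def gn.simps(2) rangeI)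
    next
      case (3 d e)
      with IH obtain \<psi> \<theta> where "d = gn \<psi>" "e = gn \<theta>" by blast
      with 3 show ?thesis by (metis gn.simps(3) rangeI)
    next
      case (4 r d)
      with IH obtain \<psi> where "d = gn \<psi>" by blast
      with 4 have "c = gn (Box (decode_rel5 r) \<psi>)"
        by (simp add: rcode_decode_rel5)
      then show ?thesis by blast
    qed
  qed
  with s(1) show "n \<in> range gn" by blast
qed

lemma is_fm_code_iff: "is_fm_code n \<longleftrightarrow> n \<in> range gn"
  using is_fm_code_gn is_fm_code_imp_gn by blast

lemma mixed_radix_less:
  fixes x y M N :: nat
  assumes "x < M" "y < N"
  shows "x * N + y < M * N"
proof -
  have "x * N + y < Suc x * N"
    using assms(2) by simp
  also have "\<dots> \<le> M * N"
    using assms(1) by (intro mult_right_mono) auto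
  finally show ?thesis .
qed

text \<open>A partial refutation of size \<open>N\<close> is stored in the octal digits of one number: first
  the relation codes \<open>\<rho> x y\<close> at position \<open>x N + y\<close>, then the truth values \<open>t u c\<close> at position
  \<open>N\<^sup>2 + u K + c\<close>.\<close>
definition digits_rel :: "nat \<Rightarrow> nat \<Rightarrow> nat \<Rightarrow> nat \<Rightarrow> nat" where
  "digits_rel N a x y = digit 8 a (x * N + y)"

definition digits_truth :: "nat \<Rightarrow> nat \<Rightarrow> nat \<Rightarrow> nat \<Rightarrow> nat \<Rightarrow> bool" where
  "digits_truth N K a u c \<longleftrightarrow> digit 8 a (N * N + u * K + c) \<noteq> 0"

lemma exists_digits_table:
  assumes "\<And>x y. x < N \<Longrightarrow> y < N \<Longrightarrow> \<rho> x y < 8"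
  obtains a where "a < 8 ^ (N * N + N * K)"
    "\<forall>x<N. \<forall>y<N. digits_rel N a x y = \<rho> x y" "\<forall>u<N. \<forall>c<K. digits_truth N K a u c = t u c"
proof -
  define f where "f p = (if p < N * N then \<rho> (p div N) (p mod N)
    else if t ((p - N * N) div K) ((p - N * N) mod K) then 1 else 0)" for p
  have "f p < 8" if "p < N * N + N * K" for p
  proof (cases "p < N * N")
    case True
    then have "0 < N"
      by (cases N) auto
    with True have "p div N < N" "p mod N < N"
      by (simp_all add: less_mult_imp_div_less)
    with True show ?thesis
      using assms by (simp add: f_def)
  qed (simp add: f_def)
  then obtain a where a: "a < 8 ^ (N * N + N * K)" "\<forall>p < N * N + N * K. digit 8 a p = f p"
    using exists_digits[of 8 "N * N + N * K" f] by auto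
  have "\<forall>x<N. \<forall>y<N. digits_rel N a x y = \<rho> x y"
  proof (intro allI impI)
    fix x y assume "x < N" "y < N"
    then have "x * N + y < N * N"
      by (rule mixed_radix_less)
    moreover have "(x * N + y) div N = x" "(x * N + y) mod N = y"
      using \<open>y < N\<close> by simp_all
    ultimately show "digits_rel N a x y = \<rho> x y"
      using a(2) by (simp add: digits_rel_def f_def)
  qed
  moreover have "\<forall>u<N. \<forall>c<K. digits_truth N K a u c = t u c"
  proof (intro allI impI)
    fix u c assume "u < N" "c < K"
    then have "u * K + c < N * K"
      by (rule mixed_radix_less)
    moreover have "(u * K + c) div K = u" "(u * K + c) mod K = c"
      using \<open>c < K\<close> by simp_all
    ultimately show "digits_truth N K a u c = t u c"
      using a(2) by (simp add: digits_truth_def f_def add.assoc)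
  qed
  ultimately show ?thesis
    using a(1) that by blast
qed

lemma exists_partial_refutation_table:
  assumes "0 < K"
  shows "(\<exists>\<rho> t. partial_refutation K N \<rho> t) \<longleftrightarrow>
    (\<exists>a < 8 ^ (N * N + N * K). partial_refutation K N (digits_rel N a) (digits_truth N K a))"
proof
  assume "\<exists>\<rho> t. partial_refutation K N \<rho> t"
  then obtain \<rho> t where partial: "partial_refutation K N \<rho> t"
    by blast
  then have "\<rho> x y < 8" if "x < N" "y < N" for x y
    using partial_refutation_less_5[OF partial that] by simp
  then obtain a where "a < 8 ^ (N * N + N * K)"
    and rel_eq: "\<forall>x<N. \<forall>y<N. digits_rel N a x y = \<rho> x y"
    and truth_eq: "\<forall>u<N. \<forall>c<K. digits_truth N K a u c = t u c"
    by (rule exists_digits_table)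
  moreover have "partial_refutation K N (digits_rel N a) (digits_truth N K a)"
    using partial_refutation_cong[OF assms rel_eq truth_eq] partial by blast
  ultimately show "\<exists>a < 8 ^ (N * N + N * K). partial_refutation K N (digits_rel N a) (digits_truth N K a)"
    by blast
qed blast

text \<open>The formulas below are read in the environment \<open>[a, N, n]\<close>: \<open>AVar 0\<close> is the code \<open>n\<close>
  of the formula, \<open>AVar 1\<close> the size \<open>N\<close>, \<open>AVar 2\<close> the table \<open>a\<close>, and \<open>K = n + 1\<close>; bound variables
  are \<open>AVar 3, AVar 4, \<dots>\<close>.\<close>
definition "rel_term x y = ADigit 8 (AVar 2) (AAdd (AMul x (AVar 1)) y)"

definition "truth_aform u c =
  ANot (AEq (ADigit 8 (AVar 2) (AAdd (AAdd (AMul (AVar 1) (AVar 1)) (AMul u (AAdd (AVar 0) (AConst 1)))) c))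
    (AConst 0))"

definition "comp5_bit_aform r s q =
  AEq (ADigit 2 (AConst comp5_table) (AAdd (AAdd (AMul (AConst 25) r) (AMul (AConst 5) s)) q)) (AConst 1)"

definition "APair_code k a = APair (AConst k) a"

definition rel_codes_aform :: aform where
  "rel_codes_aform = (let N = AVar 1; x = AVar 3; y = AVar 4; z = AVar 5;
      codes = (\<lambda>a b i j. AAnd (AEq a (AConst i)) (AEq b (AConst j))) in
    AAnd (AAll N (AEq (rel_term x x) (AConst 0)))
   (AAnd (AAll N (AAll N (let r = rel_term x y; r' = rel_term y x in
      AOr (codes r r' 0 0) (AOr (codes r r' 1 1) (AOr (codes r r' 2 2) (AOr (codes r r' 3 4) (codes r r' 4 3)))))))
    (AAll N (AAll N (AAll N (comp5_bit_aform (rel_term x y) (rel_term y z) (rel_term x z)))))))"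

definition truth_codes_aform :: aform where
  "truth_codes_aform = (let N = AVar 1; K = AAdd (AVar 0) (AConst 1) in
    AAnd (AAll N (AAll N (AAll K (let u = AVar 3; v = AVar 4; c = AVar 5 in
      AImp (AEq (rel_term u v) (AConst 0)) (AImp (truth_aform u c) (truth_aform v c))))))
   (AAnd (AAll N (AAll K (let u = AVar 3; d = AVar 4; c = APair_code 1 d in
      AImp (ALt c K) (AIff (truth_aform u c) (ANot (truth_aform u d))))))
   (AAnd (AAll N (AAll K (AAll K (let u = AVar 3; d = AVar 4; e = AVar 5; c = APair_code 2 (APair d e) in
      AImp (ALt c K) (AIff (truth_aform u c) (AAnd (truth_aform u d) (truth_aform u e)))))))
    (AAll N (AAll N (AAll K (let u = AVar 3; v = AVar 4; d = AVar 5;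
        c = APair_code 3 (APair (rel_term u v) d) in
      AImp (ALt c K) (AImp (truth_aform u c) (truth_aform v d)))))))))"

definition box_witnesses_aform :: aform where
  "box_witnesses_aform = (let N = AVar 1; K = AAdd (AVar 0) (AConst 1) in
    AAll N (AAll (AConst 5) (AAll K (let u = AVar 3; r = AVar 4; d = AVar 5;
        c = APair_code 3 (APair r d); w = AAdd (APair u c) (AConst 1) in
      AImp (ALt c K) (AImp (ANot (truth_aform u c))
        (AImp (ALt w N) (AAnd (AEq (rel_term u w) r) (ANot (truth_aform w d)))))))))"

definition partial_refutation_aform :: aform where
  "partial_refutation_aform =
     AAnd rel_codes_aform (AAnd truth_codes_aform (AAnd box_witnesses_aform
       (AImp (ALt (AConst 0) (AVar 1)) (ANot (truth_aform (AConst 0) (AVar 0))))))"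

lemma asat_partial_refutation_aform:
  "asat [a, N, n] partial_refutation_aform \<longleftrightarrow>
    partial_refutation (Suc n) N (digits_rel N a) (digits_truth N (Suc n) a)"
  unfolding partial_refutation_aform_def partial_refutation_def rel_codes_aform_def rel_codes_def
    truth_codes_aform_def truth_codes_def box_witnesses_aform_def box_witnesses_def
    rel_term_def truth_aform_def comp5_bit_aform_def APair_code_def comp5_bit_def Let_def
  by (simp add: digits_rel_def digits_truth_def digit_def)

definition built_from_aform :: aform where
  "built_from_aform = (let s = AVar 2; c = AVar 3; x = AVar 4; y = AVar 5;
      marked = (\<lambda>x. AEq (ADigit 2 s x) (AConst 1)) in
    AOr (AEx (AAdd c (AConst 1)) (AEq c (APair_code 0 x)))
   (AOr (AEx c (AAnd (AEq c (APair_code 1 x)) (marked x)))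
   (AOr (AEx c (AEx c (AAnd (AEq c (APair_code 2 (APair x y))) (AAnd (marked x) (marked y)))))
    (AEx (AConst 5) (AEx c (AAnd (AEq c (APair_code 3 (APair x y))) (marked y)))))))"

text \<open>Read in the environment \<open>[N, n]\<close>, with the digit set \<open>s\<close> bound as \<open>AVar 2\<close>.\<close>
definition is_fm_code_aform :: aform where
  "is_fm_code_aform = (let n = AVar 0; marked = (\<lambda>x. AEq (ADigit 2 (AVar 2) x) (AConst 1)) in
    AEx (APow (AConst 2) (AAdd n (AConst 1)))
      (AAnd (marked n) (AAll (AAdd n (AConst 1)) (AImp (marked (AVar 3)) built_from_aform))))"

lemma asat_is_fm_code_aform: "asat [N, n] is_fm_code_aform \<longleftrightarrow> is_fm_code n"
  unfolding is_fm_code_aform_def is_fm_code_def built_from_aform_def built_from_def APair_code_def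
    Let_def
  by (simp add: less_Suc_eq_le)

theorem r_enum_RS5_logic: "r_enum (gn ` RS5_logic TYPE(nat))"
proof (rule r_enum_Sigma1)
  let ?\<phi> = "AAnd is_fm_code_aform
    (AAll (APow (AConst 8) (AAdd (AMul (AVar 1) (AVar 1)) (AMul (AVar 1) (AAdd (AVar 0) (AConst 1)))))
      (ANot partial_refutation_aform))"
  fix n
  have asat_iff: "asat [N, n] ?\<phi> \<longleftrightarrow> is_fm_code n \<and> (\<forall>\<rho> t. \<not> partial_refutation (Suc n) N \<rho> t)" for N
    using exists_partial_refutation_table[of "Suc n" N]
    by (auto simp: asat_is_fm_code_aform asat_partial_refutation_aform)
  have "n \<in> gn ` RS5_logic TYPE(nat) \<longleftrightarrow>
      (\<exists>N. is_fm_code n \<and> (\<forall>\<rho> t. \<not> partial_refutation (Suc n) N \<rho> t))"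
  proof
    assume "n \<in> gn ` RS5_logic TYPE(nat)"
    then obtain \<phi> where "\<phi> \<in> RS5_logic TYPE(nat)" "n = gn \<phi>"
      by blast
    then show "\<exists>N. is_fm_code n \<and> (\<forall>\<rho> t. \<not> partial_refutation (Suc n) N \<rho> t)"
      using RS5_logic_nat_iff is_fm_code_gn by blast
  next
    assume "\<exists>N. is_fm_code n \<and> (\<forall>\<rho> t. \<not> partial_refutation (Suc n) N \<rho> t)"
    then obtain N where "is_fm_code n" and N: "\<forall>\<rho> t. \<not> partial_refutation (Suc n) N \<rho> t"
      by blast
    then obtain \<phi> where "n = gn \<phi>"
      using is_fm_code_iff by blast
    with N have "\<phi> \<in> RS5_logic TYPE(nat)"
      using RS5_logic_nat_iff by blast
    with \<open>n = gn \<phi>\<close> show "n \<in> gn ` RS5_logic TYPE(nat)"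
      by blast
  qed
  then show "n \<in> gn ` RS5_logic TYPE(nat) \<longleftrightarrow> (\<exists>N. asat [N, n] ?\<phi>)"
    by (simp only: asat_iff)
qed

theorem theorem8p6:
  shows "RS5_logic TYPE(nat) \<subseteq> RS5_logic TYPE('w)
       \<and> RS5_logic TYPE(nat) \<subseteq> TOP_logic TYPE('a)
       \<and> Rn_logic TYPE('n::finite) = RS5_logic TYPE(nat)
       \<and> r_enum (gn ` RS5_logic TYPE(nat))"
proof -
  have "RS5_logic TYPE(nat) \<subseteq> TOP_logic TYPE('a)"
    unfolding TOP_logic_def using RS5_logic_nat_valid_regions by blast
  moreover have "RS5_logic TYPE(nat) \<subseteq> Rn_logic TYPE('n)"
    unfolding Rn_logic_def using RS5_logic_nat_valid_regions by blast
  ultimately show ?thesis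
    using RS5_logic_nat_subset Rn_logic_subset_RS5_logic_nat r_enum_RS5_logic by blast
qed

end
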